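(* Let $\varphi:\mathbb{R}^n\to\mathbb{R}$ be upper-$\mathcal{C}^2$ on $\mathbb{R}^n$ with $\inf_{x\in\mathbb{R}^n}\varphi(x)>-\infty$, and consider the Nonmonotone Subgradient Method described in the context, with parameters $\tau_{\min}>0$, $\sigma,\beta\in{]0,1[}$. Suppose that: (a) there exists a constant $a>0$ such that $\langle w_k,d_k\rangle \leq -a \|d_k\|^2$ for all $k \in \mathbb{N}$; (b) for any bounded subsequence $(x_{k_j})_{j\in\mathbb{N}}$ generated by the method, there is a constant $b>0$ such that $\| w_{k_j}\| \leq b \| d_{k_j}\|$ for all $j \in \mathbb{N}$; (c) there exists an integer $m \geq 0$ such that $0\leq m_{k+1} \leq \min\{ m_{k }+1, m \}$ for all $k \in \mathbb{N}$. Then, for any initial point $x_0\in\mathbb{R}^n$, either the method stops at a stationary point after a finite number of iterations, or it produces a sequence $(x_{k})_{k\in\mathbb{N}}$ such that, if $\sup_{k\in\mathbb{N}}\tau_k<+\infty$, the following hold: (i) If $(x_{k_j})_{j\in\mathbb{N}}$ is a bounded subsequence of $(x_k)_{k\in\mathbb{N}}$, then $\inf_{j\in\mathbb{N}} \tau_{k_j} >0$; moreover $\lim_{j \to \infty } \|x_{k_{j}+1}-x_{k_j}\|= 0$, $\lim_{j \to \infty } \|w_{k_j}\| =0$, $\lim_{j \to \infty } \| d_{k_j}\| =0$ and $\lim_{j \to \infty} \varphi(x_{k_j}) = \lim_{k \to \infty} \varphi(x_{\ell( k)})$. (ii) If the entire sequence $(x_k)_{k\in\mathbb{N}}$ is bounded,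 then its set of accumulation points is nonempty, closed and connected, and there exists $c>0$ such that $$\min_{ 0 \leq j \leq k} \left\{ \| x_{j+1} - x_{j}\| + \| w_j\| + \| d_j\|\right\} \leq \frac{ c}{ \sqrt{ k+1}}\quad \text{for all } k \geq 0.$$ (iii) Any accumulation point of $(x_k)_{k\in\mathbb{N}}$ is a stationary point of $\varphi$. (iv) If $(x_k)_{k\in\mathbb{N}}$ is bounded and has an isolated accumulation point, then the entire sequence converges to a stationary point of $\varphi$.
   Context: Upper-$\mathcal{C}^2$: $\varphi$ is upper-$\mathcal{C}^2$ on $\mathbb{R}^n$ if on some neighborhood $V$ of each $\bar x$ there is a representation $\varphi(x)=\min_{c\in C}\varphi_c(x)$ with $C$ compact (in some topological space), each $\varphi_c$ of class $\mathcal{C}^2$ on $V$, and $\varphi_c$ and its first- and second-order partial derivatives continuous in $(x,c)\in V\times C$; such $\varphi$ is locally Lipschitz. $\partial\varphi$ is the Clarke subdifferential, and $\bar x$ is stationary if $0\in\partial\varphi(\bar x)$. For $a\in\mathbb{R}$, $[a]^+=\max\{a,0\}$. Nonmonotone Subgradient Method: given $x_0\in\mathbb{R}^n$, $\tau_{\min}>0$, $\sigma,\beta\in{]0,1[}$, for $k=0,1,\ldots$: (1) take $w_k\in\partial\varphi(x_k)$; if $w_k=0$, stop and return $x_k$. (2) Choose any $d_k\in\mathbb{R}^n\setminus\{0\}$ with $\langle w_k,d_k\rangle<0$. (3) Take any $\overline{\tau}_k\ge\tau_{\min}$, set $\tau_k:=\overline{\tau}_k$, and choose a memory parameter $m_k\in\mathbb{N}\cup\{0\}$.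 (4) While $\varphi(x_k+\tau_kd_k)>\max_{[k-m_k]^+\le i\le k}\varphi(x_i)+\sigma\tau_k\langle w_k,d_k\rangle$, set $\tau_k:=\beta\tau_k$. (5) Set $x_{k+1}:=x_k+\tau_kd_k$. Here $\tau_k$ denotes the final (accepted) stepsize. For each $k$, $\ell(k)$ denotes the smallest integer with $\ell(k)\in\operatorname{argmax}\{\varphi(x_i): [k-m_k]^+\le i\le k\}$. *)

theory Defs
  imports "HOL-Analysis.Analysis" "HOL-Library.Liminf_Limsup"
begin

text \<open>A local min-representation witnessing upper-C2: on the open set V,
  phi x = min over c in the compact (nonempty) set C of F c x; each F c is twice
  differentiable on V with gradient G c and Hessian H c, and F, its first and its
  second order partial derivatives are jointly continuous in (x,c) on V x C.\<close>
definition upper_C2_rep ::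
  "('a::euclidean_space \<Rightarrow> real) \<Rightarrow> 'a set \<Rightarrow> 'c::topological_space set \<Rightarrow>
   ('c \<Rightarrow> 'a \<Rightarrow> real) \<Rightarrow> bool" where
  "upper_C2_rep \<phi> V C F \<longleftrightarrow>
     compact C \<and> C \<noteq> {} \<and>
     (\<forall>x\<in>V. (\<exists>c\<in>C. \<phi> x = F c x) \<and> (\<forall>c\<in>C. \<phi> x \<le> F c x)) \<and>
     (\<exists>G H. (\<forall>c\<in>C. \<forall>x\<in>V.
                (F c has_derivative (\<lambda>h. G c x \<bullet> h)) (at x) \<and>
                (G c has_derivative H c x) (at x)) \<and>
            continuous_on (V \<times> C) (\<lambda>(x, c). F c x) \<and>
            (\<forall>b\<in>Basis. continuous_on (V \<times> C) (\<lambda>(x, c). G c x \<bullet> b)) \<and>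
            (\<forall>b\<in>Basis. \<forall>b'\<in>Basis.
               continuous_on (V \<times> C) (\<lambda>(x, c). H c x b \<bullet> b')))"

definition upper_C2 :: "'c::topological_space itself \<Rightarrow> ('a::euclidean_space \<Rightarrow> real) \<Rightarrow> bool" where
  "upper_C2 _ \<phi> \<longleftrightarrow>
     (\<forall>xb. \<exists>V (C::'c set) F. open V \<and> xb \<in> V \<and> upper_C2_rep \<phi> V C F)"

definition clarke_dir :: "('a::real_normed_vector \<Rightarrow> real) \<Rightarrow> 'a \<Rightarrow> 'a \<Rightarrow> ereal" where
  "clarke_dir \<phi> x v =
     Limsup (at (x, 0) within (UNIV \<times> {0<..}))
       (\<lambda>(y, t::real). ereal ((\<phi> (y + t *\<^sub>R v) - \<phi> y) / t))"

definition clarke_subdiff :: "('a::real_inner \<Rightarrow> real) \<Rightarrow> 'a \<Rightarrow> 'a set" where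
  "clarke_subdiff \<phi> x = {w. \<forall>v. ereal (w \<bullet> v) \<le> clarke_dir \<phi> x v}"

text \<open>Memory window [k - m_k]^+ .. k (nat subtraction is truncated) and l(k).\<close>
definition window :: "(nat \<Rightarrow> nat) \<Rightarrow> nat \<Rightarrow> nat set" where
  "window m k = {k - m k .. k}"

definition maxval :: "('a \<Rightarrow> real) \<Rightarrow> (nat \<Rightarrow> 'a) \<Rightarrow> (nat \<Rightarrow> nat) \<Rightarrow> nat \<Rightarrow> real" where
  "maxval \<phi> x m k = (MAX i\<in>window m k. \<phi> (x i))"

definition ell :: "('a \<Rightarrow> real) \<Rightarrow> (nat \<Rightarrow> 'a) \<Rightarrow> (nat \<Rightarrow> nat) \<Rightarrow> nat \<Rightarrow> nat" where
  "ell \<phi> x m k = (LEAST i. i \<in> window m k \<and> \<phi> (x i) = maxval \<phi> x m k)"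

text \<open>One iteration k of the Nonmonotone Subgradient Method (executed when w k \<noteq> 0):
  tau k is the accepted stepsize, obtained from taubar k after j backtracking steps.\<close>
definition nsm_step ::
  "('a::real_inner \<Rightarrow> real) \<Rightarrow> real \<Rightarrow> real \<Rightarrow> real \<Rightarrow>
   (nat \<Rightarrow> 'a) \<Rightarrow> (nat \<Rightarrow> 'a) \<Rightarrow> (nat \<Rightarrow> 'a) \<Rightarrow> (nat \<Rightarrow> real) \<Rightarrow> (nat \<Rightarrow> real) \<Rightarrow>
   (nat \<Rightarrow> nat) \<Rightarrow> nat \<Rightarrow> bool" where
  "nsm_step \<phi> \<tau>min \<sigma> \<beta> x w d taubar tau m k \<longleftrightarrow>
     d k \<noteq> 0 \<and> w k \<bullet> d k < 0 \<and> taubar k \<ge> \<tau>min \<and>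
     (let armijo = (\<lambda>t. \<phi> (x k + t *\<^sub>R d k) \<le> maxval \<phi> x m k + \<sigma> * t * (w k \<bullet> d k))
      in \<exists>j::nat. tau k = \<beta> ^ j * taubar k \<and> armijo (tau k) \<and>
                  (\<forall>i<j. \<not> armijo (\<beta> ^ i * taubar k))) \<and>
     x (Suc k) = x k + tau k *\<^sub>R d k"

definition acc_points :: "(nat \<Rightarrow> 'a::topological_space) \<Rightarrow> 'a set" where
  "acc_points x = {y. \<exists>s. strict_mono s \<and> (x \<circ> s) \<longlonglongrightarrow> y}"

end

theory Submission
  imports Defs
begin

text \<open>
  An upper-\<open>C\<^sup>2\<close> function is locally the minimum of a compact family of \<open>C\<^sup>2\<close> functions with
  uniformly bounded gradients and Hessians, so around every point it admits upper quadratic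
  models \<open>\<phi> z \<le> \<phi> y + \<langle>g, z - y\<rangle> + L \<parallel>z - y\<parallel>\<^sup>2\<close> with \<open>\<parallel>g\<parallel> \<le> G\<close>, uniformly on compact sets.
  Passing to Clarke's directional derivative, every Clarke subgradient \<open>w\<close> of \<open>\<phi>\<close> at \<open>x\<close>
  is bounded by \<open>G\<close> and satisfies the same model at \<open>x\<close>; conversely a quadratic majorant
  without linear term makes \<open>x\<close> stationary.

  For the method, the nonmonotone Armijo rule makes the reference values
  \<open>max {\<phi> (x i) | i in the memory window}\<close> nonincreasing, hence convergent. On a bounded
  subsequence the upper model shows that a rejected trial step cannot be short, so the
  accepted stepsizes stay away from zero. Walking back through the memory window from the
  iterate realising a later reference value (as in Grippo, Lampariello and Lucidi), the
  decrements \<open>\<sigma> a \<tau>\<^sub>k \<parallel>d\<^sub>k\<parallel>\<^sup>2\<close> vanish along the subsequence, and with them \<open>d\<^sub>k\<close>, the steps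
  and, by hypothesis (b), the subgradients. Letting the upper model pass to the limit gives
  stationarity of accumulation points; summing the decrements over blocks of \<open>M + 1\<close>
  iterations gives the rate \<open>O(1 / \<surd>k)\<close>; vanishing steps make the set of accumulation points
  connected, so an isolated accumulation point is the limit of the whole sequence.
\<close>

section \<open>Upper quadratic models\<close>

definition upper_quadratic_on :: "('a::real_inner \<Rightarrow> real) \<Rightarrow> 'a set \<Rightarrow> real \<Rightarrow> real \<Rightarrow> bool" where
  "upper_quadratic_on \<phi> S L G \<longleftrightarrow> (\<forall>y\<in>S. \<exists>g. norm g \<le> G \<and>
      (\<forall>z\<in>S. \<phi> z \<le> \<phi> y + g \<bullet> (z - y) + L * (norm (z - y))\<^sup>2))"

definition locally_upper_quadratic :: "('a::real_inner \<Rightarrow> real) \<Rightarrow> bool" where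
  "locally_upper_quadratic \<phi> \<longleftrightarrow> (\<forall>p. \<exists>r>0. \<exists>L G. upper_quadratic_on \<phi> (ball p r) L G)"

lemma upper_quadratic_on_mono:
  assumes "upper_quadratic_on \<phi> S L G" "T \<subseteq> S" "L \<le> L'" "G \<le> G'"
  shows "upper_quadratic_on \<phi> T L' G'"
  unfolding upper_quadratic_on_def
proof
  fix y assume "y \<in> T"
  then obtain g where g: "norm g \<le> G" "\<forall>z\<in>S. \<phi> z \<le> \<phi> y + g \<bullet> (z - y) + L * (norm (z - y))\<^sup>2"
    using assms(1,2) unfolding upper_quadratic_on_def by blast
  show "\<exists>g. norm g \<le> G' \<and> (\<forall>z\<in>T. \<phi> z \<le> \<phi> y + g \<bullet> (z - y) + L' * (norm (z - y))\<^sup>2)"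
  proof (intro exI[of _ g] conjI ballI)
    show "norm g \<le> G'" using g(1) assms(4) by linarith
    fix z assume "z \<in> T"
    moreover have "L * (norm (z - y))\<^sup>2 \<le> L' * (norm (z - y))\<^sup>2"
      using assms(3) by (simp add: mult_right_mono)
    ultimately show "\<phi> z \<le> \<phi> y + g \<bullet> (z - y) + L' * (norm (z - y))\<^sup>2"
      using g(2) assms(2) by fastforce
  qed
qed

lemma upper_quadratic_on_diff_le:
  assumes "upper_quadratic_on \<phi> S L G" "y \<in> S" "z \<in> S"
  shows "\<phi> z - \<phi> y \<le> G * norm (z - y) + L * (norm (z - y))\<^sup>2"
proof -
  obtain g where g: "norm g \<le> G" "\<phi> z \<le> \<phi> y + g \<bullet> (z - y) + L * (norm (z - y))\<^sup>2"
    using assms unfolding upper_quadratic_on_def by blast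
  have "g \<bullet> (z - y) \<le> G * norm (z - y)"
    using norm_cauchy_schwarz[of g "z - y"] g(1) by (meson mult_right_mono norm_ge_zero order_trans)
  then show ?thesis using g(2) by linarith
qed

lemma locally_upper_quadratic_isCont:
  assumes "locally_upper_quadratic \<phi>"
  shows "isCont \<phi> p"
proof -
  obtain r L G where r: "r > 0" "upper_quadratic_on \<phi> (ball p r) L G"
    using assms unfolding locally_upper_quadratic_def by blast
  have "eventually (\<lambda>z. z \<in> ball p r) (at p)"
    using r(1) by (intro eventually_at_in_open') auto
  then have "eventually (\<lambda>z. norm (\<phi> z - \<phi> p) \<le> \<bar>G\<bar> * norm (z - p) + \<bar>L\<bar> * (norm (z - p))\<^sup>2) (at p)"
  proof eventually_elim
    case (elim z)
    have p: "p \<in> ball p r" using r(1) by simp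
    have "\<phi> z - \<phi> p \<le> G * norm (z - p) + L * (norm (z - p))\<^sup>2"
      using upper_quadratic_on_diff_le[OF r(2) p elim] .
    moreover have "\<phi> p - \<phi> z \<le> G * norm (z - p) + L * (norm (z - p))\<^sup>2"
      using upper_quadratic_on_diff_le[OF r(2) elim p] by (simp add: norm_minus_commute)
    moreover have "G * norm (z - p) \<le> \<bar>G\<bar> * norm (z - p)" "L * (norm (z - p))\<^sup>2 \<le> \<bar>L\<bar> * (norm (z - p))\<^sup>2"
      by (simp_all add: mult_right_mono)
    ultimately show ?case by (simp add: abs_le_iff)
  qed
  moreover have "((\<lambda>z. \<bar>G\<bar> * norm (z - p) + \<bar>L\<bar> * (norm (z - p))\<^sup>2) \<longlongrightarrow> 0) (at p)"
  proof -
    have "((\<lambda>z. \<bar>G\<bar> * norm (z - p) + \<bar>L\<bar> * (norm (z - p))\<^sup>2) \<longlongrightarrow>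
        \<bar>G\<bar> * norm (p - p) + \<bar>L\<bar> * (norm (p - p))\<^sup>2) (at p)"
      by (intro tendsto_intros)
    then show ?thesis by simp
  qed
  ultimately have "((\<lambda>z. \<phi> z - \<phi> p) \<longlongrightarrow> 0) (at p)"
    by (rule Lim_null_comparison)
  then show ?thesis unfolding isCont_def by (simp add: LIM_zero_iff)
qed

lemma upper_quadratic_on_uniform:
  assumes "locally_upper_quadratic \<phi>" "compact K"
  shows "\<exists>e>0. \<exists>L G. \<forall>q\<in>K. upper_quadratic_on \<phi> (ball q e) L G"
proof -
  obtain R Lf Gf where R: "\<And>p. R p > 0 \<and> upper_quadratic_on \<phi> (ball p (R p)) (Lf p) (Gf p)"
    using assms(1) unfolding locally_upper_quadratic_def by metis
  have "K \<subseteq> (\<Union>p\<in>K. ball p (R p))" using R by auto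
  then obtain D where D: "D \<subseteq> K" "finite D" "K \<subseteq> (\<Union>p\<in>D. ball p (R p))"
    using compactE_image[OF assms(2), of K "\<lambda>p. ball p (R p)"] by blast
  obtain e where e: "0 < e" "\<And>q. q \<in> K \<Longrightarrow> \<exists>B \<in> (\<lambda>p. ball p (R p)) ` D. ball q e \<subseteq> B"
    using Heine_Borel_lemma[OF assms(2), of "(\<lambda>p. ball p (R p)) ` D"] D(3) by auto
  define L where "L = Max (insert 0 (Lf ` D))"
  define G where "G = Max (insert 0 (Gf ` D))"
  have "upper_quadratic_on \<phi> (ball q e) L G" if q: "q \<in> K" for q
  proof -
    obtain p where p: "p \<in> D" "ball q e \<subseteq> ball p (R p)" using e(2)[OF q] by blast
    then have "Lf p \<le> L" "Gf p \<le> G" unfolding L_def G_def using D(2) by auto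
    then show ?thesis using upper_quadratic_on_mono R p(2) by blast
  qed
  then show ?thesis using e(1) by blast
qed

lemma onorm_le_sum_abs_inner_Basis:
  fixes H :: "'a::euclidean_space \<Rightarrow> 'a"
  assumes "linear H"
  shows "onorm H \<le> (\<Sum>b\<in>Basis. \<Sum>b'\<in>Basis. \<bar>H b \<bullet> b'\<bar>)"
proof (rule onorm_le)
  fix u :: 'a
  have Hu: "H u = (\<Sum>b\<in>Basis. (u \<bullet> b) *\<^sub>R H b)"
    using assms by (subst euclidean_representation[symmetric, of u]) (simp add: linear_sum linear_scale)
  have "norm (H u) \<le> (\<Sum>b'\<in>Basis. \<bar>H u \<bullet> b'\<bar>)" by (rule norm_le_l1)
  also have "\<dots> \<le> (\<Sum>b'\<in>Basis. \<Sum>b\<in>Basis. norm u * \<bar>H b \<bullet> b'\<bar>)"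
  proof (intro sum_mono)
    fix b' :: 'a
    have "\<bar>H u \<bullet> b'\<bar> \<le> (\<Sum>b\<in>Basis. \<bar>(u \<bullet> b) * (H b \<bullet> b')\<bar>)"
      unfolding Hu inner_sum_left inner_scaleR_left by (rule sum_abs)
    also have "\<dots> \<le> (\<Sum>b\<in>Basis. norm u * \<bar>H b \<bullet> b'\<bar>)"
      by (intro sum_mono) (simp add: abs_mult Basis_le_norm mult_right_mono)
    finally show "\<bar>H u \<bullet> b'\<bar> \<le> (\<Sum>b\<in>Basis. norm u * \<bar>H b \<bullet> b'\<bar>)" .
  qed
  also have "\<dots> = (\<Sum>b\<in>Basis. \<Sum>b'\<in>Basis. \<bar>H b \<bullet> b'\<bar>) * norm u"
    by (subst sum.swap) (simp add: sum_distrib_left mult.commute)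
  finally show "norm (H u) \<le> (\<Sum>b\<in>Basis. \<Sum>b'\<in>Basis. \<bar>H b \<bullet> b'\<bar>) * norm u" .
qed

lemma quadratic_upper_bound_of_lipschitz_derivative:
  fixes f :: "'a::real_inner \<Rightarrow> real"
  assumes "convex S"
    and deriv: "\<And>q. q \<in> S \<Longrightarrow> (f has_derivative (\<lambda>h. f' q \<bullet> h)) (at q within S)"
    and lip: "\<And>p q. p \<in> S \<Longrightarrow> q \<in> S \<Longrightarrow> norm (f' p - f' q) \<le> L * norm (p - q)"
    and "y \<in> S" "z \<in> S"
  shows "f z \<le> f y + f' y \<bullet> (z - y) + L * (norm (z - y))\<^sup>2"
proof (cases "z = y")
  case False
  have "0 \<le> L * norm (z - y)"
    using lip[OF \<open>z \<in> S\<close> \<open>y \<in> S\<close>] norm_ge_zero order_trans by blast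
  then have L: "0 \<le> L" using False by (simp add: zero_le_mult_iff)
  have seg: "closed_segment y z \<subseteq> S"
    using assms(4,5,1) by (rule closed_segment_subset)
  define \<psi> where "\<psi> q = f q - f' y \<bullet> q" for q
  have "norm (\<psi> z - \<psi> y) \<le> (L * norm (z - y)) * norm (z - y)"
  proof (rule differentiable_bound[where S = "closed_segment y z"])
    show "convex (closed_segment y z)" "z \<in> closed_segment y z" "y \<in> closed_segment y z"
      by (simp_all add: convex_closed_segment)
  next
    fix q assume q: "q \<in> closed_segment y z"
    have "(f has_derivative (\<lambda>h. f' q \<bullet> h)) (at q within closed_segment y z)"
      using deriv[of q] q seg by (auto intro: has_derivative_subset)
    then show "(\<psi> has_derivative (\<lambda>h. f' q \<bullet> h - f' y \<bullet> h)) (at q within closed_segment y z)"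
      unfolding \<psi>_def by (intro derivative_intros)
  next
    fix q assume q: "q \<in> closed_segment y z"
    have "onorm (\<lambda>h. f' q \<bullet> h - f' y \<bullet> h) \<le> norm (f' q - f' y)"
      by (rule onorm_bound) (simp_all add: inner_diff_left[symmetric] Cauchy_Schwarz_ineq2)
    also have "\<dots> \<le> L * norm (q - y)" using lip q seg \<open>y \<in> S\<close> by blast
    also have "\<dots> \<le> L * norm (z - y)"
      using segment_bound(1)[OF q] L by (rule mult_left_mono)
    finally show "onorm (\<lambda>h. f' q \<bullet> h - f' y \<bullet> h) \<le> L * norm (z - y)" .
  qed
  moreover have "\<psi> z - \<psi> y = f z - f y - f' y \<bullet> (z - y)"
    unfolding \<psi>_def by (simp add: inner_diff_right)
  ultimately show ?thesis by (simp add: power2_eq_square mult.assoc)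
qed simp

lemma upper_quadratic_on_min_family:
  fixes \<phi> :: "'a::real_inner \<Rightarrow> real" and F :: "'c \<Rightarrow> 'a \<Rightarrow> real"
  assumes "convex S"
    and attained: "\<And>y. y \<in> S \<Longrightarrow> \<exists>c\<in>C. \<phi> y = F c y"
    and below: "\<And>c y. c \<in> C \<Longrightarrow> y \<in> S \<Longrightarrow> \<phi> y \<le> F c y"
    and dF: "\<And>c y. c \<in> C \<Longrightarrow> y \<in> S \<Longrightarrow> (F c has_derivative (\<lambda>h. G c y \<bullet> h)) (at y within S)"
    and dG: "\<And>c y. c \<in> C \<Longrightarrow> y \<in> S \<Longrightarrow> (G c has_derivative H c y) (at y within S)"
    and G_bound: "\<And>c y. c \<in> C \<Longrightarrow> y \<in> S \<Longrightarrow> norm (G c y) \<le> Mg"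
    and H_bound: "\<And>c y. c \<in> C \<Longrightarrow> y \<in> S \<Longrightarrow> onorm (H c y) \<le> Mh"
  shows "upper_quadratic_on \<phi> S Mh Mg"
  unfolding upper_quadratic_on_def
proof
  fix y assume y: "y \<in> S"
  obtain c where c: "c \<in> C" "\<phi> y = F c y" using attained[OF y] by blast
  have lip: "norm (G c p - G c q) \<le> Mh * norm (p - q)" if "p \<in> S" "q \<in> S" for p q
    using differentiable_bound[OF \<open>convex S\<close> dG H_bound that] c(1) by blast
  show "\<exists>g. norm g \<le> Mg \<and> (\<forall>z\<in>S. \<phi> z \<le> \<phi> y + g \<bullet> (z - y) + Mh * (norm (z - y))\<^sup>2)"
  proof (intro exI[of _ "G c y"] conjI ballI)
    show "norm (G c y) \<le> Mg" using G_bound c(1) y .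
    fix z assume z: "z \<in> S"
    have "\<phi> z \<le> F c z" using below c(1) z .
    also have "\<dots> \<le> F c y + G c y \<bullet> (z - y) + Mh * (norm (z - y))\<^sup>2"
      using quadratic_upper_bound_of_lipschitz_derivative[OF \<open>convex S\<close> dF[OF c(1)] lip y z] .
    finally show "\<phi> z \<le> \<phi> y + G c y \<bullet> (z - y) + Mh * (norm (z - y))\<^sup>2" using c(2) by simp
  qed
qed

lemma continuous_on_compact_bdd_above:
  fixes f :: "'a::topological_space \<Rightarrow> real"
  assumes "compact K" "continuous_on K f"
  obtains B where "\<And>x. x \<in> K \<Longrightarrow> f x \<le> B"
  using bounded_imp_bdd_above[OF compact_imp_bounded[OF compact_continuous_image[OF assms(2,1)]]]
  by (auto simp: bdd_above_def)

lemma upper_C2_rep_imp_upper_quadratic: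
  fixes \<phi> :: "'a::euclidean_space \<Rightarrow> real" and C :: "'c::topological_space set"
  assumes rep: "upper_C2_rep \<phi> V C F" and "open V" "p \<in> V"
  shows "\<exists>r>0. \<exists>L G. upper_quadratic_on \<phi> (ball p r) L G"
proof -
  have C: "compact C"
    and attained: "\<And>y. y \<in> V \<Longrightarrow> \<exists>c\<in>C. \<phi> y = F c y"
    and below: "\<And>c y. c \<in> C \<Longrightarrow> y \<in> V \<Longrightarrow> \<phi> y \<le> F c y"
    using rep unfolding upper_C2_rep_def by blast+
  obtain G H where
        der: "\<And>c y. c \<in> C \<Longrightarrow> y \<in> V \<Longrightarrow>
           (F c has_derivative (\<lambda>h. G c y \<bullet> h)) (at y) \<and> (G c has_derivative H c y) (at y)"
    and cG: "\<And>b. b \<in> Basis \<Longrightarrow> continuous_on (V \<times> C) (\<lambda>(y, c). G c y \<bullet> b)"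
    and cH: "\<And>b b'. b \<in> Basis \<Longrightarrow> b' \<in> Basis \<Longrightarrow> continuous_on (V \<times> C) (\<lambda>(y, c). H c y b \<bullet> b')"
    using rep unfolding upper_C2_rep_def by blast
  obtain r where r: "r > 0" "cball p r \<subseteq> V" using assms(2,3) open_contains_cball by blast
  define K where "K = cball p r \<times> C"
  have K: "compact K" "K \<subseteq> V \<times> C"
    unfolding K_def using compact_Times[OF compact_cball C(1)] r(2) by auto
  have "continuous_on K (\<lambda>(y, c). \<Sum>b\<in>Basis. \<bar>G c y \<bullet> b\<bar>)"
    unfolding case_prod_beta'
    by (intro continuous_on_sum continuous_on_rabs continuous_on_subset[OF _ K(2)])
      (rule cG[unfolded case_prod_beta'])
  then obtain Mg where Mg: "\<And>yc. yc \<in> K \<Longrightarrow> (\<lambda>(y, c). \<Sum>b\<in>Basis. \<bar>G c y \<bullet> b\<bar>) yc \<le> Mg"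
    by (rule continuous_on_compact_bdd_above[OF K(1)]) blast
  have "continuous_on K (\<lambda>(y, c). \<Sum>b\<in>Basis. \<Sum>b'\<in>Basis. \<bar>H c y b \<bullet> b'\<bar>)"
    unfolding case_prod_beta'
    by (intro continuous_on_sum continuous_on_rabs continuous_on_subset[OF _ K(2)])
      (rule cH[unfolded case_prod_beta'])
  then obtain Mh where Mh: "\<And>yc. yc \<in> K \<Longrightarrow>
      (\<lambda>(y, c). \<Sum>b\<in>Basis. \<Sum>b'\<in>Basis. \<bar>H c y b \<bullet> b'\<bar>) yc \<le> Mh"
    by (rule continuous_on_compact_bdd_above[OF K(1)]) blast
  have "upper_quadratic_on \<phi> (cball p r) Mh Mg"
  proof (rule upper_quadratic_on_min_family[where F = F and G = G and H = H])
    fix c y assume cy: "c \<in> C" "y \<in> cball p r"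
    then have y: "y \<in> V" and yc: "(y, c) \<in> K" using r(2) unfolding K_def by auto
    show "(F c has_derivative (\<lambda>h. G c y \<bullet> h)) (at y within cball p r)"
      using der[OF cy(1) y] by (blast intro: has_derivative_at_withinI)
    show "(G c has_derivative H c y) (at y within cball p r)"
      using der[OF cy(1) y] by (blast intro: has_derivative_at_withinI)
    show "norm (G c y) \<le> Mg"
      using norm_le_l1[of "G c y"] Mg[OF yc] by simp
    have "linear (H c y)" using der[OF cy(1) y] by (blast intro: has_derivative_linear)
    then show "onorm (H c y) \<le> Mh"
      using onorm_le_sum_abs_inner_Basis Mh[OF yc] by fastforce
  qed (use attained below r(2) in auto)
  then have "upper_quadratic_on \<phi> (ball p r) Mh Mg"
    by (rule upper_quadratic_on_mono) auto
  then show ?thesis using r(1) by blast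
qed

lemma upper_C2_imp_locally_upper_quadratic:
  fixes \<phi> :: "'a::euclidean_space \<Rightarrow> real"
  assumes "upper_C2 TYPE('c::topological_space) \<phi>"
  shows "locally_upper_quadratic \<phi>"
  unfolding locally_upper_quadratic_def
proof
  fix p
  obtain V and C :: "'c set" and F where "open V" "p \<in> V" "upper_C2_rep \<phi> V C F"
    using assms unfolding upper_C2_def by blast
  then show "\<exists>r>0. \<exists>L G. upper_quadratic_on \<phi> (ball p r) L G"
    using upper_C2_rep_imp_upper_quadratic by blast
qed

section \<open>The Clarke subdifferential\<close>

abbreviation clarke_at :: "'a::real_normed_vector \<Rightarrow> ('a \<times> real) filter" where
  "clarke_at x \<equiv> at (x, 0) within UNIV \<times> {0<..}"

lemma clarke_at_neq_bot: "clarke_at x \<noteq> bot"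
proof -
  have "(x, e / 2) \<in> (UNIV \<times> {0<..}) \<inter> ball (x, 0) e - {(x, 0)}" if "e > 0" for e :: real
    using that by (auto simp: dist_Pair_Pair)
  then show ?thesis using not_trivial_limit_within_ball by blast
qed

lemma tendsto_clarke_at:
  shows tendsto_fst_clarke_at: "(fst \<longlongrightarrow> x) (clarke_at x)"
    and tendsto_snd_clarke_at: "(snd \<longlongrightarrow> 0) (clarke_at x)"
  using tendsto_fst[OF tendsto_ident_at[of "(x, 0)"]] tendsto_snd[OF tendsto_ident_at[of "(x, 0)"]]
  by simp_all

lemma eventually_clarke_at:
  fixes x v :: "'a::real_normed_vector"
  assumes "open U" "x \<in> U"
  shows "eventually (\<lambda>(y, t). 0 < t \<and> y \<in> U \<and> y + t *\<^sub>R v \<in> U) (clarke_at x)"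
proof -
  have "((\<lambda>z. fst z + snd z *\<^sub>R v) \<longlongrightarrow> x + 0 *\<^sub>R v) (clarke_at x)"
    by (intro tendsto_intros tendsto_clarke_at)
  then have "eventually (\<lambda>z. fst z + snd z *\<^sub>R v \<in> U) (clarke_at x)"
    using assms by (simp add: topological_tendstoD)
  moreover have "eventually (\<lambda>z. fst z \<in> U) (clarke_at x)"
    using topological_tendstoD[OF tendsto_fst_clarke_at assms] .
  moreover have "eventually (\<lambda>z. 0 < snd z) (clarke_at x)"
    unfolding eventually_at_filter by (rule always_eventually) auto
  ultimately show ?thesis
    by eventually_elim (simp add: case_prod_beta)
qed

lemma clarke_dir_le_tendsto:
  fixes \<phi> :: "'a::real_normed_vector \<Rightarrow> real"
  assumes "eventually (\<lambda>(y, t). (\<phi> (y + t *\<^sub>R v) - \<phi> y) / t \<le> R (y, t)) (clarke_at x)"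
    and "(R \<longlongrightarrow> c) (clarke_at x)"
  shows "clarke_dir \<phi> x v \<le> ereal c"
proof -
  have "clarke_dir \<phi> x v \<le> Limsup (clarke_at x) (\<lambda>z. ereal (R z))"
    unfolding clarke_dir_def
    by (rule Limsup_mono) (use assms(1) in \<open>auto elim: eventually_mono\<close>)
  also have "\<dots> = ereal c"
    using clarke_at_neq_bot assms(2) by (intro lim_imp_Limsup) (simp_all add: tendsto_ereal)
  finally show ?thesis .
qed

lemma diff_quotient_le_of_upper_model:
  assumes "t > 0" "\<phi> (y + t *\<^sub>R v) \<le> \<phi> y + g \<bullet> (t *\<^sub>R v) + L * (norm (t *\<^sub>R v))\<^sup>2"
  shows "(\<phi> (y + t *\<^sub>R v) - \<phi> y) / t \<le> g \<bullet> v + L * t * (norm v)\<^sup>2"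
proof -
  have "\<phi> (y + t *\<^sub>R v) - \<phi> y \<le> (g \<bullet> v + L * t * (norm v)\<^sup>2) * t"
    using assms by (simp add: power2_eq_square algebra_simps)
  then show ?thesis using assms(1) by (simp add: pos_divide_le_eq)
qed

lemma clarke_subdiff_norm_le:
  fixes \<phi> :: "'a::real_inner \<Rightarrow> real"
  assumes U: "upper_quadratic_on \<phi> (ball x e) L G" and "e > 0"
    and w: "w \<in> clarke_subdiff \<phi> x"
  shows "norm w \<le> G"
proof -
  have wv: "w \<bullet> v \<le> G * norm v" for v
  proof -
    have "eventually (\<lambda>(y, t). 0 < t \<and> y \<in> ball x e \<and> y + t *\<^sub>R v \<in> ball x e) (clarke_at x)"
      using \<open>e > 0\<close> by (intro eventually_clarke_at) auto
    then have "eventually (\<lambda>(y, t). (\<phi> (y + t *\<^sub>R v) - \<phi> y) / t \<le> G * norm v + L * t * (norm v)\<^sup>2)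
        (clarke_at x)"
    proof (rule eventually_mono, clarify)
      fix y t assume yt: "0 < t" "y \<in> ball x e" "y + t *\<^sub>R v \<in> ball x e"
      obtain g where g: "norm g \<le> G" "\<forall>z\<in>ball x e. \<phi> z \<le> \<phi> y + g \<bullet> (z - y) + L * (norm (z - y))\<^sup>2"
        using U yt(2) unfolding upper_quadratic_on_def by blast
      have "\<phi> (y + t *\<^sub>R v) \<le> \<phi> y + g \<bullet> (t *\<^sub>R v) + L * (norm (t *\<^sub>R v))\<^sup>2"
        using g(2)[rule_format, OF yt(3)] by simp
      then have "(\<phi> (y + t *\<^sub>R v) - \<phi> y) / t \<le> g \<bullet> v + L * t * (norm v)\<^sup>2"
        using yt(1) by (rule diff_quotient_le_of_upper_model[rotated])
      moreover have "g \<bullet> v \<le> G * norm v"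
        using norm_cauchy_schwarz[of g v] g(1) by (meson mult_right_mono norm_ge_zero order_trans)
      ultimately show "(\<phi> (y + t *\<^sub>R v) - \<phi> y) / t \<le> G * norm v + L * t * (norm v)\<^sup>2"
        by linarith
    qed
    moreover have "((\<lambda>z. G * norm v + L * snd z * (norm v)\<^sup>2) \<longlongrightarrow> G * norm v + L * 0 * (norm v)\<^sup>2)
        (clarke_at x)"
      by (intro tendsto_intros tendsto_snd_clarke_at)
    ultimately have "clarke_dir \<phi> x v \<le> ereal (G * norm v)"
      using clarke_dir_le_tendsto[where R = "\<lambda>z. G * norm v + L * snd z * (norm v)\<^sup>2"]
      by (simp add: case_prod_beta)
    moreover have "ereal (w \<bullet> v) \<le> clarke_dir \<phi> x v"
      using w unfolding clarke_subdiff_def by blast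
    ultimately show ?thesis using order_trans ereal_less_eq(3) by blast
  qed
  have "0 \<le> G"
    using U \<open>e > 0\<close> unfolding upper_quadratic_on_def by (meson centre_in_ball norm_ge_zero order_trans)
  then show ?thesis
    using wv[of w] by (cases "w = 0") (simp_all add: dot_square_norm power2_eq_square)
qed

lemma clarke_subdiff_upper_model:
  fixes \<phi> :: "'a::real_inner \<Rightarrow> real"
  assumes U: "upper_quadratic_on \<phi> (ball x e) L G" and "isCont \<phi> x"
    and w: "w \<in> clarke_subdiff \<phi> x" and h: "norm h < e"
  shows "\<phi> (x + h) \<le> \<phi> x + w \<bullet> h + L * (norm h)\<^sup>2"
proof -
  have xh: "x + h \<in> ball x e" using h by (simp add: dist_norm)
  define R where "R = (\<lambda>(y, t). \<phi> y - \<phi> (x + h) + G * norm (x - y) + L * (norm (x + h - y))\<^sup>2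
                                + L * t * (norm h)\<^sup>2)"
  have "eventually (\<lambda>(y, t). 0 < t \<and> y \<in> ball x e \<and> y + t *\<^sub>R (- h) \<in> ball x e) (clarke_at x)"
    using h norm_ge_zero[of h] by (intro eventually_clarke_at) (auto simp del: norm_ge_zero)
  then have "eventually (\<lambda>(y, t). (\<phi> (y + t *\<^sub>R (- h)) - \<phi> y) / t \<le> R (y, t)) (clarke_at x)"
  proof (rule eventually_mono, clarify)
    fix y t assume yt: "0 < t" "y \<in> ball x e" "y + t *\<^sub>R (- h) \<in> ball x e"
    obtain g where g: "norm g \<le> G" "\<forall>z\<in>ball x e. \<phi> z \<le> \<phi> y + g \<bullet> (z - y) + L * (norm (z - y))\<^sup>2"
      using U yt(2) unfolding upper_quadratic_on_def by blast
    have "\<phi> (y + t *\<^sub>R (- h)) \<le> \<phi> y + g \<bullet> (t *\<^sub>R (- h)) + L * (norm (t *\<^sub>R (- h)))\<^sup>2"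
      using g(2)[rule_format, OF yt(3)] by simp
    then have "(\<phi> (y + t *\<^sub>R (- h)) - \<phi> y) / t \<le> g \<bullet> (- h) + L * t * (norm (- h))\<^sup>2"
      using yt(1) by (rule diff_quotient_le_of_upper_model[rotated])
    moreover have "\<phi> (x + h) \<le> \<phi> y + g \<bullet> (x + h - y) + L * (norm (x + h - y))\<^sup>2"
      using g(2) xh by blast
    moreover have "g \<bullet> (x - y) \<le> G * norm (x - y)"
      using norm_cauchy_schwarz[of g "x - y"] g(1) by (meson mult_right_mono norm_ge_zero order_trans)
    ultimately show "(\<phi> (y + t *\<^sub>R (- h)) - \<phi> y) / t \<le> R (y, t)"
      unfolding R_def by (simp add: inner_diff_right inner_add_right)
  qed
  moreover have "(R \<longlongrightarrow> \<phi> x - \<phi> (x + h) + G * norm (x - x) + L * (norm (x + h - x))\<^sup>2 + L * 0 * (norm h)\<^sup>2)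
      (clarke_at x)"
    unfolding R_def case_prod_beta'
    by (intro tendsto_intros isCont_tendsto_compose[OF \<open>isCont \<phi> x\<close>] tendsto_clarke_at)
  ultimately have "clarke_dir \<phi> x (- h) \<le> ereal (\<phi> x - \<phi> (x + h) + L * (norm h)\<^sup>2)"
    using clarke_dir_le_tendsto by fastforce
  moreover have "ereal (w \<bullet> (- h)) \<le> clarke_dir \<phi> x (- h)"
    using w unfolding clarke_subdiff_def by blast
  ultimately have "w \<bullet> (- h) \<le> \<phi> x - \<phi> (x + h) + L * (norm h)\<^sup>2"
    using order_trans ereal_less_eq(3) by blast
  then show ?thesis by simp
qed

lemma Limsup_mono_filter:
  assumes "F \<le> F'"
  shows "Limsup F f \<le> Limsup F' f"
  unfolding Limsup_def
  by (rule INF_superset_mono) (use assms in \<open>auto simp: le_filter_def\<close>)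

lemma Limsup_ray_le_clarke_dir:
  fixes \<phi> :: "'a::real_normed_vector \<Rightarrow> real"
  shows "Limsup (at_right 0) (\<lambda>t. ereal ((\<phi> y - \<phi> (y - t *\<^sub>R v)) / t)) \<le> clarke_dir \<phi> y v"
proof -
  let ?q = "\<lambda>(z, t). ereal ((\<phi> (z + t *\<^sub>R v) - \<phi> z) / t)"
  define g where "g t = (y - t *\<^sub>R v, t)" for t :: real
  have "(g \<longlongrightarrow> (y, 0)) (at_right 0)"
    unfolding g_def by (rule tendsto_eq_intros) (auto intro!: tendsto_eq_intros)
  moreover have "eventually (\<lambda>t. g t \<in> UNIV \<times> {0<..} \<and> g t \<noteq> (y, 0)) (at_right 0)"
    using eventually_at_right_less[of 0] by (rule eventually_mono) (simp add: g_def)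
  ultimately have "filterlim g (clarke_at y) (at_right 0)"
    unfolding filterlim_at by blast
  then have "Limsup (at_right 0) (\<lambda>t. ?q (g t)) \<le> clarke_dir \<phi> y v"
    unfolding clarke_dir_def filterlim_def
    using Limsup_filtermap_ge order_trans Limsup_mono_filter by blast
  then show ?thesis by (simp add: g_def)
qed

lemma clarke_stationary_of_quadratic_majorant:
  fixes \<phi> :: "'a::real_inner \<Rightarrow> real"
  assumes "\<rho> > 0" and majorant: "\<And>h. norm h < \<rho> \<Longrightarrow> \<phi> (y + h) \<le> \<phi> y + L * (norm h)\<^sup>2"
  shows "0 \<in> clarke_subdiff \<phi> y"
  unfolding clarke_subdiff_def
proof (intro CollectI allI)
  fix v :: 'a
  let ?q = "\<lambda>t. ereal ((\<phi> y - \<phi> (y - t *\<^sub>R v)) / t)"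
  have "eventually (\<lambda>t. 0 < t \<and> t * norm v < \<rho>) (at_right (0::real))"
  proof -
    have "((\<lambda>t. t * norm v) \<longlongrightarrow> 0 * norm v) (at_right (0::real))"
      by (intro tendsto_intros)
    then have "eventually (\<lambda>t. t * norm v < \<rho>) (at_right (0::real))"
      using \<open>\<rho> > 0\<close> by (simp add: order_tendstoD(2))
    then show ?thesis by (simp add: eventually_conj_iff eventually_at_right_less)
  qed
  then have "eventually (\<lambda>t. ereal (- (L * t * (norm v)\<^sup>2)) \<le> ?q t) (at_right 0)"
  proof (rule eventually_mono, clarify)
    fix t :: real assume t: "0 < t" "t * norm v < \<rho>"
    have "\<phi> (y + - (t *\<^sub>R v)) \<le> \<phi> y + L * (norm (- (t *\<^sub>R v)))\<^sup>2"
      using majorant[of "- (t *\<^sub>R v)"] t by simp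
    then have "- (L * t * (norm v)\<^sup>2) * t \<le> \<phi> y - \<phi> (y - t *\<^sub>R v)"
      using t(1) by (simp add: power2_eq_square algebra_simps)
    then show "ereal (- (L * t * (norm v)\<^sup>2)) \<le> ?q t"
      using t(1) by (simp add: pos_le_divide_eq)
  qed
  then have "ereal 0 \<le> Liminf (at_right 0) ?q"
  proof (rule order_trans[OF eq_refl Liminf_mono, rotated])
    have "((\<lambda>t. ereal (- (L * t * (norm v)\<^sup>2))) \<longlongrightarrow> ereal (- (L * 0 * (norm v)\<^sup>2))) (at_right 0)"
      by (intro tendsto_intros)
    then show "ereal 0 = Liminf (at_right 0) (\<lambda>t. ereal (- (L * t * (norm v)\<^sup>2)))"
      by (intro lim_imp_Liminf[symmetric]) simp_all
  qed
  then show "ereal (0 \<bullet> v) \<le> clarke_dir \<phi> y v"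
    using Liminf_le_Limsup[of "at_right (0::real)" ?q] Limsup_ray_le_clarke_dir[of \<phi> y v]
    by (auto intro: order_trans)
qed

lemma clarke_stationary_of_limit:
  fixes \<phi> :: "'a::euclidean_space \<Rightarrow> real"
  assumes upper: "locally_upper_quadratic \<phi>" and z: "z \<longlonglongrightarrow> y" and v: "v \<longlonglongrightarrow> 0"
    and subgrad: "\<And>j. v j \<in> clarke_subdiff \<phi> (z j)"
  shows "0 \<in> clarke_subdiff \<phi> y"
proof -
  obtain e L G where e: "e > 0" and U: "\<And>q. q \<in> cball y 1 \<Longrightarrow> upper_quadratic_on \<phi> (ball q e) L G"
    using upper_quadratic_on_uniform[OF upper compact_cball] by blast
  have cont: "isCont \<phi> p" for p
    using upper by (rule locally_upper_quadratic_isCont)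
  have "\<phi> (y + h) \<le> \<phi> y + L * (norm h)\<^sup>2" if h: "norm h < e / 2" for h
  proof -
    define R where "R j = \<phi> (z j) + v j \<bullet> (y + h - z j) + L * (norm (y + h - z j))\<^sup>2" for j
    have "R \<longlonglongrightarrow> \<phi> y + 0 \<bullet> (y + h - y) + L * (norm (y + h - y))\<^sup>2"
      unfolding R_def by (intro tendsto_intros isCont_tendsto_compose[OF cont z] z v)
    then have lim: "R \<longlonglongrightarrow> \<phi> y + L * (norm h)\<^sup>2" by simp
    have "min 1 (e / 2) > 0" using e by simp
    then have "eventually (\<lambda>j. dist (z j) y < min 1 (e / 2)) sequentially"
      using z unfolding tendsto_iff by blast
    then have "eventually (\<lambda>j. \<phi> (y + h) \<le> R j) sequentially"
    proof eventually_elim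
      case (elim j)
      then have zj: "z j \<in> cball y 1" by (simp add: dist_commute)
      have "norm (y + h - z j) = norm (h + (y - z j))"
        by (simp add: algebra_simps)
      also have "\<dots> \<le> norm h + dist (z j) y"
        using norm_triangle_ineq[of h "y - z j"] by (simp add: dist_norm norm_minus_commute)
      also have "\<dots> < e"
        using elim h by linarith
      finally have "norm (y + h - z j) < e" .
      with zj have "\<phi> (z j + (y + h - z j)) \<le> R j"
        unfolding R_def by (intro clarke_subdiff_upper_model[OF U cont subgrad])
      then show ?case by simp
    qed
    then show ?thesis by (rule tendsto_lowerbound[OF lim]) simp
  qed
  then show ?thesis
    using e by (intro clarke_stationary_of_quadratic_majorant[of "e / 2"]) auto
qed

section \<open>Accumulation points of sequences\<close>

lemma acc_pointsI: "strict_mono s \<Longrightarrow> (x \<circ> s) \<longlonglongrightarrow> y \<Longrightarrow> y \<in> acc_points x"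
  unfolding acc_points_def by blast

lemma mem_acc_points_iff:
  fixes x :: "nat \<Rightarrow> 'a::metric_space"
  shows "y \<in> acc_points x \<longleftrightarrow> (\<forall>e>0. frequently (\<lambda>n. dist (x n) y < e) sequentially)"
proof
  assume "y \<in> acc_points x"
  then obtain s where s: "strict_mono s" "(x \<circ> s) \<longlonglongrightarrow> y" unfolding acc_points_def by blast
  show "\<forall>e>0. frequently (\<lambda>n. dist (x n) y < e) sequentially"
  proof (intro allI impI)
    fix e :: real assume "e > 0"
    then obtain n0 where n0: "\<And>n. n \<ge> n0 \<Longrightarrow> dist (x (s n)) y < e"
      using s(2) unfolding lim_sequentially by auto
    have "\<exists>n\<ge>N. dist (x n) y < e" for N
      using n0[of "max n0 N"] seq_suble[OF s(1), of "max n0 N"] by (intro exI[of _ "s (max n0 N)"]) auto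
    then show "frequently (\<lambda>n. dist (x n) y < e) sequentially"
      unfolding frequently_sequentially by blast
  qed
next
  assume "\<forall>e>0. frequently (\<lambda>n. dist (x n) y < e) sequentially"
  then have "\<forall>k N. \<exists>n\<ge>N. dist (x n) y < 1 / Suc k"
    unfolding frequently_sequentially by simp
  then obtain f where f: "\<And>k N. N \<le> f k N" "\<And>k N. dist (x (f k N)) y < 1 / Suc k"
    by metis
  define s where "s = rec_nat (f 0 0) (\<lambda>k n. f (Suc k) (Suc n))"
  have s_0: "s 0 = f 0 0" and s_Suc: "s (Suc k) = f (Suc k) (Suc (s k))" for k
    by (simp_all add: s_def)
  have "strict_mono s"
    unfolding strict_mono_Suc_iff s_Suc using f(1) by (simp add: Suc_le_lessD)
  moreover have "(x \<circ> s) \<longlonglongrightarrow> y"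
  proof -
    have bound: "norm (dist (x (s k)) y) \<le> inverse (real (Suc k))" for k
    proof -
      obtain N where "s k = f k N" using s_0 s_Suc by (cases k) blast+
      then show ?thesis using f(2)[of k N] by (simp add: inverse_eq_divide)
    qed
    have "(\<lambda>k. dist (x (s k)) y) \<longlonglongrightarrow> 0"
    proof (rule Lim_null_comparison)
      show "eventually (\<lambda>k. norm (dist (x (s k)) y) \<le> inverse (real (Suc k))) sequentially"
        using bound by simp
    qed (rule LIMSEQ_inverse_real_of_nat)
    then show ?thesis unfolding o_def by (rule tendsto_dist_iff[THEN iffD2])
  qed
  ultimately show "y \<in> acc_points x" by (rule acc_pointsI)
qed

lemma closed_acc_points:
  fixes x :: "nat \<Rightarrow> 'a::metric_space"
  shows "closed (acc_points x)"
  unfolding closure_subset_eq[symmetric]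
proof
  fix y assume "y \<in> closure (acc_points x)"
  then have near: "\<forall>e>0. \<exists>z\<in>acc_points x. dist z y < e"
    by (simp add: closure_approachable)
  have "frequently (\<lambda>n. dist (x n) y < e) sequentially" if "e > 0" for e
  proof -
    obtain z where z: "z \<in> acc_points x" "dist z y < e / 2"
      using near half_gt_zero[OF \<open>e > 0\<close>] by blast
    then have "frequently (\<lambda>n. dist (x n) z < e / 2) sequentially"
      using z(1) half_gt_zero[OF \<open>e > 0\<close>] unfolding mem_acc_points_iff by blast
    then show ?thesis
    proof (rule frequently_elim1)
      fix n assume "dist (x n) z < e / 2"
      then show "dist (x n) y < e" using z(2) dist_triangle[of "x n" y z] by linarith
    qed
  qed
  then show "y \<in> acc_points x" by (simp add: mem_acc_points_iff)
qed

lemma acc_points_subset_closure: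
  fixes x :: "nat \<Rightarrow> 'a::first_countable_topology"
  shows "acc_points x \<subseteq> closure (range x)"
proof
  fix y assume "y \<in> acc_points x"
  then obtain s where "(x \<circ> s) \<longlonglongrightarrow> y" unfolding acc_points_def by blast
  then show "y \<in> closure (range x)"
    unfolding closure_sequential by (intro exI[of _ "x \<circ> s"]) auto
qed

lemma bounded_imp_acc_point_of_subseq:
  fixes x :: "nat \<Rightarrow> 'a::heine_borel" and r :: "nat \<Rightarrow> nat"
  assumes "bounded (range x)" "strict_mono r"
  obtains r' y where "strict_mono r'" "(x \<circ> (r \<circ> r')) \<longlonglongrightarrow> y" "y \<in> acc_points x"
proof -
  have "bounded (range (x \<circ> r))"
    using assms(1) by (rule bounded_subset) auto
  from bounded_imp_convergent_subsequence[OF this]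
  obtain y r' where "strict_mono r'" "((x \<circ> r) \<circ> r') \<longlonglongrightarrow> y"
    by blast
  moreover have "strict_mono (r \<circ> r')"
    using assms(2) \<open>strict_mono r'\<close> by (rule strict_mono_o)
  ultimately show ?thesis
    using that acc_pointsI by (metis comp_assoc)
qed

lemma bounded_imp_acc_points_nonempty:
  fixes x :: "nat \<Rightarrow> 'a::heine_borel"
  assumes "bounded (range x)"
  shows "acc_points x \<noteq> {}"
  using bounded_imp_acc_point_of_subseq[OF assms strict_mono_id] by blast

lemma frequently_between_of_small_steps:
  fixes f :: "nat \<Rightarrow> real"
  assumes steps: "eventually (\<lambda>n. \<bar>f (Suc n) - f n\<bar> < c' - c) sequentially"
    and below: "frequently (\<lambda>n. f n < c) sequentially"
    and above: "frequently (\<lambda>n. c \<le> f n) sequentially"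
  shows "frequently (\<lambda>n. c \<le> f n \<and> f n < c') sequentially"
  unfolding frequently_sequentially
proof
  fix N
  obtain N0 where N0: "\<And>n. n \<ge> N0 \<Longrightarrow> \<bar>f (Suc n) - f n\<bar> < c' - c"
    using steps unfolding eventually_sequentially by blast
  obtain n1 where n1: "n1 \<ge> max N N0" "f n1 < c"
    using below unfolding frequently_sequentially by blast
  obtain n2 where n2: "n2 \<ge> n1" "c \<le> f n2"
    using above unfolding frequently_sequentially by blast
  \<comment> \<open>the first index after \<open>n1\<close> at which \<open>f\<close> crosses \<open>c\<close> upwards\<close>
  define n where "n = (LEAST n. n1 \<le> n \<and> c \<le> f n)"
  have n: "n1 \<le> n" "c \<le> f n"
    using LeastI[of "\<lambda>n. n1 \<le> n \<and> c \<le> f n" n2] n2 unfolding n_def by auto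
  then obtain m where m: "n = Suc m" "n1 \<le> m"
    using n1(2) by (metis le_eq_less_or_eq less_imp_Suc_add le_add1 not_le)
  have "f m < c"
    using not_less_Least[of m "\<lambda>n. n1 \<le> n \<and> c \<le> f n"] m unfolding n_def by auto
  then have "f n < c'" using N0[of m] m n1(1) by auto
  then show "\<exists>n\<ge>N. c \<le> f n \<and> f n < c'" using n n1(1) by (intro exI[of _ n]) auto
qed

lemma le_infdist:
  assumes "A \<noteq> {}" "\<And>a. a \<in> A \<Longrightarrow> d \<le> dist x a"
  shows "d \<le> infdist x A"
  unfolding infdist_notempty[OF assms(1)] by (rule cINF_greatest) (use assms in auto)

lemma frequently_in_closed_imp_acc_point:
  fixes x :: "nat \<Rightarrow> 'a::heine_borel"
  assumes "bounded (range x)" "closed S" "frequently (\<lambda>n. x n \<in> S) sequentially"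
  obtains y where "y \<in> acc_points x" "y \<in> S"
proof -
  obtain r :: "nat \<Rightarrow> nat" where r: "strict_mono r" "\<And>n. x (r n) \<in> S"
    using assms(3) not_eventually_sequentiallyD unfolding frequently_def by blast
  obtain r' y where "(x \<circ> (r \<circ> r')) \<longlonglongrightarrow> y" "y \<in> acc_points x"
    using bounded_imp_acc_point_of_subseq[OF assms(1) r(1)] by blast
  moreover have "y \<in> S"
    using closed_sequentially[OF assms(2) _ \<open>(x \<circ> (r \<circ> r')) \<longlonglongrightarrow> y\<close>] r(2) by simp
  ultimately show ?thesis using that by blast
qed

lemma frequently_infdist_between:
  fixes x :: "nat \<Rightarrow> 'a::metric_space"
  assumes steps: "(\<lambda>n. dist (x (Suc n)) (x n)) \<longlonglongrightarrow> 0" and "\<delta> > 0"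
    and a: "a \<in> acc_points x" "a \<in> A" and b: "b \<in> acc_points x" "\<delta> \<le> infdist b A"
  shows "frequently (\<lambda>n. \<delta> / 3 \<le> infdist (x n) A \<and> infdist (x n) A < 2 * \<delta> / 3) sequentially"
proof (rule frequently_between_of_small_steps)
  have \<delta>3: "\<delta> / 3 > 0" using \<open>\<delta> > 0\<close> by simp
  have "eventually (\<lambda>n. dist (x (Suc n)) (x n) < \<delta> / 3) sequentially"
    using order_tendstoD(2)[OF steps \<delta>3] .
  then show "eventually (\<lambda>n. \<bar>infdist (x (Suc n)) A - infdist (x n) A\<bar> < 2 * \<delta> / 3 - \<delta> / 3)
      sequentially"
  proof eventually_elim
    case (elim n)
    then show ?case using infdist_triangle_abs[of "x (Suc n)" A "x n"] by linarith
  qed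
  have "frequently (\<lambda>n. dist (x n) a < \<delta> / 3) sequentially"
    using a(1) \<delta>3 unfolding mem_acc_points_iff by blast
  then show "frequently (\<lambda>n. infdist (x n) A < \<delta> / 3) sequentially"
  proof (rule frequently_elim1)
    fix n assume "dist (x n) a < \<delta> / 3"
    then show "infdist (x n) A < \<delta> / 3" using infdist_le[OF a(2), of "x n"] by linarith
  qed
  have "frequently (\<lambda>n. dist (x n) b < \<delta> / 3) sequentially"
    using b(1) \<delta>3 unfolding mem_acc_points_iff by blast
  then show "frequently (\<lambda>n. \<delta> / 3 \<le> infdist (x n) A) sequentially"
  proof (rule frequently_elim1)
    fix n assume "dist (x n) b < \<delta> / 3"
    then show "\<delta> / 3 \<le> infdist (x n) A"
      using infdist_triangle[of b A "x n"] b(2) \<open>\<delta> > 0\<close> unfolding dist_commute[of b] by linarith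
  qed
qed

text \<open>If the steps of a bounded sequence tend to zero, the distance to one part of a
  separation of its accumulation points crosses the gap between the parts infinitely often,
  which produces an accumulation point in neither part.\<close>

lemma connected_acc_points:
  fixes x :: "nat \<Rightarrow> 'a::heine_borel"
  assumes bounded: "bounded (range x)" and steps: "(\<lambda>n. dist (x (Suc n)) (x n)) \<longlonglongrightarrow> 0"
  shows "connected (acc_points x)"
  unfolding connected_closed_set[OF closed_acc_points]
proof (intro notI, elim exE conjE)
  fix A B assume A: "closed A" "A \<noteq> {}" and B: "closed B" "B \<noteq> {}"
    and AB: "A \<union> B = acc_points x" "A \<inter> B = {}"
  have "compact (closure (range x) \<inter> A)"
    using bounded A(1) by (intro compact_Int_closed) auto
  moreover have "closure (range x) \<inter> A = A"
    using AB(1) acc_points_subset_closure[of x] by blast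
  ultimately obtain \<delta> where \<delta>: "\<delta> > 0" "\<And>a b. a \<in> A \<Longrightarrow> b \<in> B \<Longrightarrow> \<delta> \<le> dist a b"
    using separate_compact_closed[OF _ B(1) AB(2)] by auto
  have far: "\<delta> \<le> infdist b A" if "b \<in> B" for b
    using A(2) \<delta>(2) that by (intro le_infdist) (auto simp: dist_commute)
  obtain a b where "a \<in> A" "b \<in> B" using A(2) B(2) by blast
  then have "frequently (\<lambda>n. \<delta> / 3 \<le> infdist (x n) A \<and> infdist (x n) A < 2 * \<delta> / 3) sequentially"
    using AB(1) by (intro frequently_infdist_between[OF steps \<delta>(1) _ _ _ far]) auto
  then have "frequently (\<lambda>n. x n \<in> {z. \<delta> / 3 \<le> infdist z A \<and> infdist z A \<le> 2 * \<delta> / 3}) sequentially"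
    by (rule frequently_elim1) simp
  moreover have "closed {z. \<delta> / 3 \<le> infdist z A \<and> infdist z A \<le> 2 * \<delta> / 3}"
    by (intro closed_Collect_conj closed_Collect_le continuous_intros)
  ultimately obtain y where y: "y \<in> acc_points x" "\<delta> / 3 \<le> infdist y A" "infdist y A \<le> 2 * \<delta> / 3"
    using frequently_in_closed_imp_acc_point[OF bounded] by blast
  then have "y \<notin> A" using \<delta>(1) by auto
  then have "y \<in> B" using y(1) AB(1) by blast
  then show False using far y(3) \<delta>(1) by fastforce
qed

lemma acc_points_eq_singleton_of_isolated:
  assumes "connected (acc_points x)" "y \<in> acc_points x" "e > 0"
    and isolated: "\<And>z. z \<in> acc_points x \<Longrightarrow> z \<noteq> y \<Longrightarrow> e \<le> dist z y"
  shows "acc_points x = {y}"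
proof -
  have "acc_points x \<subseteq> ball y e \<union> - cball y (e / 2)"
    using isolated \<open>e > 0\<close> by (fastforce simp: dist_commute)
  moreover have "acc_points x \<inter> ball y e \<inter> - cball y (e / 2) = {}"
    using isolated by (fastforce simp: dist_commute)
  moreover have "acc_points x \<inter> ball y e \<noteq> {}"
    using assms(2,3) by auto
  ultimately have "acc_points x \<subseteq> ball y e"
    using assms(1) unfolding connected_def by blast
  then show ?thesis
    using isolated assms(2) by (fastforce simp: dist_commute)
qed

lemma bounded_tendsto_of_acc_points_singleton:
  fixes x :: "nat \<Rightarrow> 'a::heine_borel"
  assumes bounded: "bounded (range x)" and single: "acc_points x = {y}"
  shows "x \<longlonglongrightarrow> y"
proof (rule ccontr)
  assume "\<not> x \<longlonglongrightarrow> y"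
  then obtain e where "e > 0" "\<not> eventually (\<lambda>n. dist (x n) y < e) sequentially"
    unfolding tendsto_iff by blast
  then have "frequently (\<lambda>n. x n \<in> - ball y e) sequentially"
    unfolding frequently_def by (simp add: dist_commute)
  then obtain z where "z \<in> acc_points x" "z \<in> - ball y e"
    using frequently_in_closed_imp_acc_point[OF bounded] by blast
  then show False using single \<open>e > 0\<close> by simp
qed

section \<open>The nonmonotone subgradient method\<close>

lemma Min_prefix_le_inverse_sqrt:
  fixes e \<delta> :: "nat \<Rightarrow> real" and P :: nat
  assumes P: "0 < P" and e_nonneg: "\<And>j. 0 \<le> e j" and e_sq: "\<And>j. (e j)\<^sup>2 \<le> \<delta> j"
    and small: "\<And>n. 0 < n \<Longrightarrow> \<exists>j < n * P. real n * \<delta> j \<le> D"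
  shows "\<exists>c>0. \<forall>k. (MIN j\<in>{..k}. e j) \<le> c / sqrt (real k + 1)"
proof -
  have \<delta>_nonneg: "0 \<le> \<delta> j" for j using e_sq[of j] by (meson order_trans zero_le_power2)
  have D: "0 \<le> D" using small[of 1] \<delta>_nonneg by (auto intro: order_trans)
  define c where "c = sqrt (2 * real P * D) + e 0 * sqrt (real P) + 1"
  have "c > 0" unfolding c_def using D e_nonneg[of 0] by (simp add: add_nonneg_pos)
  moreover have "(MIN j\<in>{..k}. e j) \<le> c / sqrt (real k + 1)" for k
  proof (cases "(k + 1) div P = 0")
    case True
    then have "real k + 1 \<le> real P" using P by (simp add: div_eq_0_iff)
    then have "e 0 * sqrt (real k + 1) \<le> e 0 * sqrt (real P)"
      using e_nonneg by (simp add: mult_left_mono)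
    then have "e 0 \<le> (e 0 * sqrt (real P)) / sqrt (real k + 1)"
      by (simp add: pos_le_divide_eq)
    also have "\<dots> \<le> c / sqrt (real k + 1)"
      unfolding c_def using D by (intro divide_right_mono) auto
    finally show ?thesis by (rule order_trans[rotated]) (intro Min_le; simp)
  next
    case False
    define n where "n = (k + 1) div P"
    have n: "0 < n" "n * P \<le> k + 1" "k + 1 < (n + 1) * P"
      using False P div_times_less_eq_dividend[of "k + 1" P] dividend_less_times_div[of P "k + 1"]
      unfolding n_def by (auto simp: mult.commute)
    obtain j where j: "j < n * P" "real n * \<delta> j \<le> D" using small[OF n(1)] by blast
    have "real k + 1 \<le> 2 * real n * real P"
    proof -
      have "(n + 1) * P \<le> 2 * n * P" using n(1) by (intro mult_right_mono) auto
      then have "k + 1 \<le> 2 * n * P" using n(3) by linarith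
      then show ?thesis by (metis of_nat_1 of_nat_add of_nat_le_iff of_nat_mult of_nat_numeral)
    qed
    then have "(real k + 1) * (e j)\<^sup>2 \<le> (2 * real n * real P) * \<delta> j"
      using e_sq[of j] \<delta>_nonneg[of j] by (intro mult_mono) auto
    also have "\<dots> = 2 * real P * (real n * \<delta> j)"
      by (simp add: algebra_simps)
    also have "\<dots> \<le> 2 * real P * D"
      using j(2) by (intro mult_left_mono) auto
    finally have "e j \<le> sqrt (2 * real P * D / (real k + 1))"
      by (intro real_le_rsqrt) (simp add: pos_le_divide_eq mult.commute)
    also have "\<dots> \<le> c / sqrt (real k + 1)"
      unfolding c_def real_sqrt_divide using e_nonneg[of 0]
      by (intro divide_right_mono) auto
    finally have "e j \<le> c / sqrt (real k + 1)" .
    moreover have "(MIN j\<in>{..k}. e j) \<le> e j"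
      using j(1) n(2) by (intro Min_le) auto
    ultimately show ?thesis by linarith
  qed
  ultimately show ?thesis by blast
qed

text \<open>A run of the method that never stops, so that the hypotheses of the theorem hold at
  every iteration, and whose stepsizes are bounded.\<close>

locale nsm_run =
  fixes \<phi> :: "'a::euclidean_space \<Rightarrow> real" and x w d :: "nat \<Rightarrow> 'a"
    and taubar tau :: "nat \<Rightarrow> real" and m :: "nat \<Rightarrow> nat"
    and \<tau>min \<sigma> \<beta> a :: real and M :: nat
  assumes upper_quadratic: "locally_upper_quadratic \<phi>"
    and bounded_below: "bdd_below (range \<phi>)"
    and params: "\<tau>min > 0" "0 < \<sigma>" "\<sigma> < 1" "0 < \<beta>" "\<beta> < 1"
    and subgrad: "\<And>k. w k \<in> clarke_subdiff \<phi> (x k)"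
    and step: "\<And>k. nsm_step \<phi> \<tau>min \<sigma> \<beta> x w d taubar tau m k"
    and a_pos: "a > 0"
    and sufficient_descent: "\<And>k. w k \<bullet> d k \<le> - a * (norm (d k))\<^sup>2"
    and subgrad_le_dir: "\<And>s :: nat \<Rightarrow> nat. strict_mono s \<Longrightarrow> bounded (range (x \<circ> s)) \<Longrightarrow>
                           \<exists>b>0. \<forall>j. norm (w (s j)) \<le> b * norm (d (s j))"
    and memory: "\<And>k. m (Suc k) \<le> min (m k + 1) M"
    and bdd_above_tau: "bdd_above (range tau)"
begin

abbreviation ref_val :: "nat \<Rightarrow> real" where
  "ref_val \<equiv> maxval \<phi> x m"

definition decrement :: "nat \<Rightarrow> real" where
  "decrement k = \<sigma> * a * tau k * (norm (d k))\<^sup>2"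

definition tau_max :: real where
  "tau_max = (SUP k. tau k)"

lemma isCont_\<phi>: "isCont \<phi> p"
  using upper_quadratic by (rule locally_upper_quadratic_isCont)

lemma step_facts:
  shows d_nonzero: "d k \<noteq> 0"
    and x_Suc: "x (Suc k) = x k + tau k *\<^sub>R d k"
    and tau_pos: "tau k > 0"
    and armijo: "\<phi> (x (Suc k)) \<le> ref_val k + \<sigma> * tau k * (w k \<bullet> d k)"
    and backtracked: "\<tau>min \<le> tau k \<or>
       \<not> \<phi> (x k + (tau k / \<beta>) *\<^sub>R d k) \<le> ref_val k + \<sigma> * (tau k / \<beta>) * (w k \<bullet> d k)"
proof -
  obtain j where j: "tau k = \<beta> ^ j * taubar k"
      "\<phi> (x k + tau k *\<^sub>R d k) \<le> ref_val k + \<sigma> * tau k * (w k \<bullet> d k)"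
      "\<And>i. i < j \<Longrightarrow> \<not> \<phi> (x k + (\<beta> ^ i * taubar k) *\<^sub>R d k)
                           \<le> ref_val k + \<sigma> * (\<beta> ^ i * taubar k) * (w k \<bullet> d k)"
    and s: "d k \<noteq> 0" "taubar k \<ge> \<tau>min" "x (Suc k) = x k + tau k *\<^sub>R d k"
    using step[of k] unfolding nsm_step_def Let_def by blast
  show "d k \<noteq> 0" "x (Suc k) = x k + tau k *\<^sub>R d k" using s by auto
  show "tau k > 0" using j(1) s(2) params by simp
  show "\<phi> (x (Suc k)) \<le> ref_val k + \<sigma> * tau k * (w k \<bullet> d k)" using j(2) s(3) by simp
  show "\<tau>min \<le> tau k \<or>
       \<not> \<phi> (x k + (tau k / \<beta>) *\<^sub>R d k) \<le> ref_val k + \<sigma> * (tau k / \<beta>) * (w k \<bullet> d k)"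
  proof (cases j)
    case 0
    then show ?thesis using j(1) s(2) by simp
  next
    case (Suc i)
    then have "tau k / \<beta> = \<beta> ^ i * taubar k" using j(1) params by simp
    then show ?thesis using j(3) Suc by auto
  qed
qed

lemma tau_le_tau_max: "tau k \<le> tau_max"
  unfolding tau_max_def using bdd_above_tau by (intro cSUP_upper) simp_all

lemma tau_max_pos: "tau_max > 0"
  using tau_pos[of 0] tau_le_tau_max[of 0] by linarith

lemma decrement_nonneg: "decrement k \<ge> 0"
  unfolding decrement_def using params a_pos tau_pos[of k] by simp

lemma value_Suc_le: "\<phi> (x (Suc k)) \<le> ref_val k - decrement k"
proof -
  have "\<sigma> * tau k * (w k \<bullet> d k) \<le> \<sigma> * tau k * (- a * (norm (d k))\<^sup>2)"
    using sufficient_descent[of k] params tau_pos[of k] by (intro mult_left_mono) auto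
  then show ?thesis using armijo[of k] unfolding decrement_def by (simp add: algebra_simps)
qed

lemma window_subset: "window m k \<subseteq> {k - M..k}"
proof (cases k)
  case (Suc k')
  then show ?thesis using memory[of k'] unfolding window_def by auto
qed (simp add: window_def)

lemma value_le_ref_val: "i \<in> window m k \<Longrightarrow> \<phi> (x i) \<le> ref_val k"
  unfolding maxval_def window_def by (intro Max_ge) auto

lemma ref_val_attained: "\<exists>i\<in>window m k. \<phi> (x i) = ref_val k"
proof -
  have "ref_val k \<in> (\<lambda>i. \<phi> (x i)) ` window m k"
    unfolding maxval_def window_def by (intro Max_in) auto
  then show ?thesis by force
qed

lemma ell_mem_window: "ell \<phi> x m k \<in> window m k"
  and value_ell: "\<phi> (x (ell \<phi> x m k)) = ref_val k"
  using LeastI_ex[OF ref_val_attained[unfolded Bex_def]] unfolding ell_def by auto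

lemma value_le_ref_val_self: "\<phi> (x k) \<le> ref_val k"
  by (rule value_le_ref_val) (simp add: window_def)

lemma ref_val_Suc_le: "ref_val (Suc k) \<le> ref_val k"
proof -
  obtain i where i: "i \<in> window m (Suc k)" "\<phi> (x i) = ref_val (Suc k)"
    using ref_val_attained by blast
  show ?thesis
  proof (cases "i = Suc k")
    case True
    then show ?thesis using i value_Suc_le[of k] decrement_nonneg[of k] by simp
  next
    case False
    then have "i \<in> window m k"
      using i(1) memory[of k] unfolding window_def by auto
    then show ?thesis using i(2) value_le_ref_val by metis
  qed
qed

lemma ref_val_antimono: "k \<le> j \<Longrightarrow> ref_val j \<le> ref_val k"
  by (induction j rule: dec_induct) (use ref_val_Suc_le order_trans in blast)+

definition ref_lim :: real where
  "ref_lim = (INF k. ref_val k)"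

lemma bdd_below_ref_val: "bdd_below (range ref_val)"
proof -
  obtain c where "\<And>z. c \<le> \<phi> z" using bounded_below unfolding bdd_below_def by auto
  then have "c \<le> ref_val k" for k using value_le_ref_val_self[of k] order_trans by blast
  then show ?thesis by (rule bdd_belowI2)
qed

lemma ref_lim_le: "ref_lim \<le> ref_val k"
  unfolding ref_lim_def using bdd_below_ref_val by (rule cINF_lower) simp

lemma ref_val_tendsto: "ref_val \<longlonglongrightarrow> ref_lim"
  unfolding ref_lim_def
  by (rule LIMSEQ_decseq_INF[OF bdd_below_ref_val]) (simp add: decseq_Suc_iff ref_val_Suc_le)

lemma ref_val_tendsto_along:
  assumes "\<And>j. j \<le> p j"
  shows "(\<lambda>j. ref_val (p j)) \<longlonglongrightarrow> ref_lim"
  by (rule tendsto_sandwich[OF _ _ tendsto_const ref_val_tendsto])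
    (use ref_lim_le ref_val_antimono assms in auto)

lemma ref_val_block_decrease: "\<exists>j\<in>{k..k + M}. ref_val (k + M + 1) \<le> ref_val k - decrement j"
proof -
  obtain i where i: "i \<in> window m (k + M + 1)" "\<phi> (x i) = ref_val (k + M + 1)"
    using ref_val_attained by blast
  then have "i \<in> {Suc k .. k + M + 1}" using window_subset by fastforce
  then obtain j where j: "i = Suc j" "j \<in> {k..k + M}" by (cases i) auto
  have "\<phi> (x i) \<le> ref_val k - decrement j"
    using value_Suc_le[of j] ref_val_antimono[of k j] j by simp
  then show ?thesis using i(2) j(2) by auto
qed

lemma norm_step: "norm (x (Suc k) - x k) = tau k * norm (d k)"
  using x_Suc[of k] tau_pos[of k] by simp

lemma a_norm_d_le: "a * norm (d k) \<le> norm (w k)"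
proof -
  have "(a * norm (d k)) * norm (d k) \<le> - (w k \<bullet> d k)"
    using sufficient_descent[of k] by (simp add: power2_eq_square)
  also have "\<dots> \<le> norm (w k) * norm (d k)"
    using norm_cauchy_schwarz[of "- w k" "d k"] by simp
  finally show ?thesis using d_nonzero[of k] by simp
qed

lemma sq_dist_le_ref_val_gap:
  assumes "q = p \<or> q = Suc p"
  shows "(norm (x q - x p))\<^sup>2 \<le> tau_max / (\<sigma> * a) * (ref_val p - \<phi> (x q))"
  using assms
proof
  assume "q = p"
  then show ?thesis
    using value_le_ref_val_self[of p] tau_max_pos params a_pos by simp
next
  assume q: "q = Suc p"
  have "(norm (x q - x p))\<^sup>2 = tau p * (tau p * (norm (d p))\<^sup>2)"
    unfolding q norm_step by (simp add: power2_eq_square)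
  also have "\<dots> \<le> tau_max * (tau p * (norm (d p))\<^sup>2)"
    using tau_le_tau_max tau_pos[of p] by (intro mult_right_mono) auto
  also have "\<dots> = tau_max / (\<sigma> * a) * decrement p"
    unfolding decrement_def using params a_pos by (simp add: field_simps)
  also have "\<dots> \<le> tau_max / (\<sigma> * a) * (ref_val p - \<phi> (x q))"
    using value_Suc_le[of p] tau_max_pos params a_pos q by (intro mult_left_mono) auto
  finally show ?thesis .
qed

lemma subgrad_bounded_on:
  assumes "bounded S"
  obtains G where "\<And>k. x k \<in> S \<Longrightarrow> norm (w k) \<le> G"
proof -
  obtain e L G where "e > 0" "\<And>q. q \<in> closure S \<Longrightarrow> upper_quadratic_on \<phi> (ball q e) L G"
    using upper_quadratic_on_uniform[OF upper_quadratic, of "closure S"] assms by auto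
  then have "norm (w k) \<le> G" if "x k \<in> S" for k
    using clarke_subdiff_norm_le subgrad that closure_subset by blast
  then show ?thesis using that by blast
qed

lemma bounded_shifted_subseq:
  assumes "bounded (range (\<lambda>j. x (s j)))"
  shows "bounded (range (\<lambda>j. x (s j + i)))"
proof (induction i)
  case (Suc i)
  obtain G where G: "\<And>k. x k \<in> range (\<lambda>j. x (s j + i)) \<Longrightarrow> norm (w k) \<le> G"
    using subgrad_bounded_on[OF Suc.IH] by blast
  have "norm (x (s j + Suc i) - x (s j + i)) \<le> tau_max * (G / a)" for j
  proof -
    have "norm (d (s j + i)) \<le> G / a"
      using a_norm_d_le[of "s j + i"] G[of "s j + i"] a_pos by (simp add: field_simps)
    then have "tau (s j + i) * norm (d (s j + i)) \<le> tau_max * (G / a)"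
      using tau_le_tau_max tau_pos[of "s j + i"] tau_max_pos by (intro mult_mono) auto
    then show ?thesis using norm_step by simp
  qed
  then have "bounded (range (\<lambda>j. x (s j + Suc i) - x (s j + i)))"
    unfolding bounded_iff by blast
  from bounded_plus_comp[OF Suc.IH this] show ?case by simp
qed (use assms in simp)

lemma rejected_trial_lower_bound:
  assumes "t > 0"
    and rejected: "\<not> \<phi> (x k + t *\<^sub>R d k) \<le> ref_val k + \<sigma> * t * (w k \<bullet> d k)"
    and model: "\<phi> (x k + t *\<^sub>R d k) \<le> \<phi> (x k) + w k \<bullet> (t *\<^sub>R d k) + L * (norm (t *\<^sub>R d k))\<^sup>2"
  shows "(1 - \<sigma>) * a < L * t"
proof -
  define q where "q = w k \<bullet> d k"
  define n where "n = (norm (d k))\<^sup>2"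
  have n: "n > 0" unfolding n_def using d_nonzero by simp
  have "\<sigma> * t * q < t * q + L * t\<^sup>2 * n"
    using rejected model value_le_ref_val_self[of k] \<open>t > 0\<close>
    by (simp add: q_def n_def power_mult_distrib)
  then have "0 < t * ((1 - \<sigma>) * q + L * t * n)"
    by (simp add: algebra_simps power2_eq_square)
  then have "0 < (1 - \<sigma>) * q + L * t * n"
    using \<open>t > 0\<close> by (simp add: zero_less_mult_iff)
  moreover have "(1 - \<sigma>) * q \<le> (1 - \<sigma>) * (- a * n)"
    unfolding q_def n_def using sufficient_descent params by (intro mult_left_mono) auto
  ultimately have "0 < (L * t - (1 - \<sigma>) * a) * n"
    by (simp add: algebra_simps)
  then show ?thesis using n by (simp add: zero_less_mult_iff)
qed

lemma stepsize_lower_bound: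
  assumes U: "upper_quadratic_on \<phi> (ball (x k) e) L G" and L: "L > 0" and D: "norm (d k) < D"
  shows "min \<tau>min (min (\<beta> * e / D) (\<beta> * (1 - \<sigma>) * a / L)) \<le> tau k"
proof -
  let ?t = "tau k / \<beta>"
  have t: "?t > 0" using tau_pos params by simp
  have "D > 0" using D norm_ge_zero le_less_trans by blast
  consider "\<tau>min \<le> tau k" | "e \<le> ?t * norm (d k)"
    | "?t * norm (d k) < e" "\<not> \<phi> (x k + ?t *\<^sub>R d k) \<le> ref_val k + \<sigma> * ?t * (w k \<bullet> d k)"
    using backtracked[of k] by fastforce
  then show ?thesis
  proof cases
    case 1
    then show ?thesis by linarith
  next
    case 2
    then have "e \<le> ?t * D"
      using mult_left_mono[OF less_imp_le[OF D], of ?t] t by linarith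
    then have "\<beta> * e / D \<le> tau k" using \<open>D > 0\<close> params by (simp add: field_simps)
    then show ?thesis by linarith
  next
    case 3
    have "norm (?t *\<^sub>R d k) < e" using 3(1) tau_pos[of k] params(4) by simp
    then have "(1 - \<sigma>) * a < L * ?t"
      by (intro rejected_trial_lower_bound[OF t 3(2)]
          clarke_subdiff_upper_model[OF U isCont_\<phi> subgrad])
    then have "\<beta> * (1 - \<sigma>) * a / L \<le> tau k" using L params by (simp add: field_simps)
    then show ?thesis by linarith
  qed
qed

lemma stepsize_bounded_below:
  assumes "bounded (range (\<lambda>j. x (s j)))"
  obtains t where "t > 0" "\<And>j. t \<le> tau (s j)"
proof -
  obtain e L G where e: "e > 0"
    and U: "\<And>q. q \<in> closure (range (\<lambda>j. x (s j))) \<Longrightarrow> upper_quadratic_on \<phi> (ball q e) L G"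
    using upper_quadratic_on_uniform[OF upper_quadratic] assms by (metis compact_closure)
  define L' where "L' = \<bar>L\<bar> + 1"
  have L': "L' > 0" "L \<le> L'" unfolding L'_def by auto
  have U': "upper_quadratic_on \<phi> (ball (x (s j)) e) L' G" for j
  proof -
    have "x (s j) \<in> closure (range (\<lambda>j. x (s j)))" by (rule closure_subset[THEN subsetD]) simp
    then show ?thesis by (rule upper_quadratic_on_mono[OF U subset_refl L'(2) order_refl])
  qed
  define D where "D = G / a + 1"
  have D: "norm (d (s j)) < D" for j
    using a_norm_d_le[of "s j"] clarke_subdiff_norm_le[OF U'[of j] e subgrad] a_pos
    unfolding D_def by (simp add: field_simps)
  then have "D > 0" using norm_ge_zero le_less_trans by blast
  then have "min \<tau>min (min (\<beta> * e / D) (\<beta> * (1 - \<sigma>) * a / L')) > 0"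
    using params e L' a_pos by simp
  with stepsize_lower_bound[OF U' L'(1) D] show ?thesis using that by blast
qed

text \<open>If the value at the later of two consecutive (or equal) iterates tends to the limit of
  the reference values, the sufficient decrease forces the step between them to vanish,
  and uniform continuity transfers the limit to the earlier iterate.\<close>

lemma value_tendsto_of_next:
  assumes "\<And>j. j \<le> p j" and next_or_eq: "\<And>j. q j = p j \<or> q j = Suc (p j)"
    and lim: "(\<lambda>j. \<phi> (x (q j))) \<longlonglongrightarrow> ref_lim"
    and K: "compact K" "\<And>j. x (p j) \<in> K" "\<And>j. x (q j) \<in> K"
  shows "(\<lambda>j. \<phi> (x (p j))) \<longlonglongrightarrow> ref_lim"
proof -
  define C where "C = tau_max / (\<sigma> * a)"
  have steps_vanish: "(\<lambda>j. x (q j) - x (p j)) \<longlonglongrightarrow> 0"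
  proof (rule Lim_null_comparison)
    have "norm (x (q j) - x (p j)) \<le> sqrt (C * (ref_val (p j) - \<phi> (x (q j))))" for j
      unfolding C_def using sq_dist_le_ref_val_gap[OF next_or_eq] by (rule real_le_rsqrt)
    then show "eventually (\<lambda>j. norm (x (q j) - x (p j))
        \<le> sqrt (C * (ref_val (p j) - \<phi> (x (q j))))) sequentially"
      by simp
    have "(\<lambda>j. sqrt (C * (ref_val (p j) - \<phi> (x (q j))))) \<longlonglongrightarrow> sqrt (C * (ref_lim - ref_lim))"
      by (intro tendsto_intros ref_val_tendsto_along assms(1) lim)
    then show "(\<lambda>j. sqrt (C * (ref_val (p j) - \<phi> (x (q j))))) \<longlonglongrightarrow> 0"
      by simp
  qed
  have "(\<lambda>j. dist (x (p j)) (x (q j))) \<longlonglongrightarrow> 0"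
    using tendsto_norm_zero[OF steps_vanish] by (simp add: dist_norm norm_minus_commute)
  moreover have "uniformly_continuous_on K \<phi>"
    using K(1) isCont_\<phi> by (intro compact_uniformly_continuous continuous_at_imp_continuous_on) auto
  ultimately have "(\<lambda>j. dist (\<phi> (x (p j))) (\<phi> (x (q j)))) \<longlonglongrightarrow> 0"
    using K(2,3) unfolding uniformly_continuous_on_sequentially
    by (auto dest: spec[of _ "\<lambda>j. x (p j)"] spec[of _ "\<lambda>j. x (q j)"])
  then have "(\<lambda>j. \<phi> (x (p j)) - \<phi> (x (q j))) \<longlonglongrightarrow> 0"
    by (simp add: dist_real_def tendsto_rabs_zero_iff)
  then show ?thesis by (rule Lim_transform[OF lim])
qed

lemma subseq_value_tendsto:
  assumes s: "strict_mono s" and bounded: "bounded (range (\<lambda>j. x (s j)))"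
  shows "(\<lambda>j. \<phi> (x (s j))) \<longlonglongrightarrow> ref_lim"
    and "(\<lambda>j. decrement (s j)) \<longlonglongrightarrow> 0"
proof -
  define N where "N = M + 1"
  define l where "l j = ell \<phi> x m (s j + N)" for j
  have l: "Suc (s j) \<le> l j" "l j \<le> s j + N" for j
    using ell_mem_window[of "s j + N"] window_subset[of "s j + N"] unfolding l_def N_def by auto
  \<comment> \<open>walk back from \<open>l j\<close>, whose value is a reference value, to \<open>Suc (s j)\<close>\<close>
  define q where "q i j = max (Suc (s j)) (l j - i)" for i j
  define K where "K = closure (\<Union>i\<le>N. range (\<lambda>j. x (s j + i)))"
  have K: "compact K"
    unfolding K_def using bounded_shifted_subseq[OF bounded]
    by (intro compact_closure[THEN iffD2] bounded_UN) auto
  have xK: "x k \<in> K" if "s j \<le> k" "k \<le> s j + N" for j k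
    unfolding K_def using that
    by (intro closure_subset[THEN subsetD] UN_I[of "k - s j"] rev_image_eqI[of j]) auto
  have j_le: "j \<le> s j" for j using seq_suble[OF s] .
  have q_lim: "(\<lambda>j. \<phi> (x (q i j))) \<longlonglongrightarrow> ref_lim" for i
  proof (induction i)
    case 0
    have "(\<lambda>j. ref_val (s j + N)) \<longlonglongrightarrow> ref_lim"
      using j_le by (intro ref_val_tendsto_along) (simp add: trans_le_add1)
    moreover have "\<phi> (x (l j)) = ref_val (s j + N)" for j
      unfolding l_def by (rule value_ell)
    moreover have "q 0 j = l j" for j
      using l(1)[of j] unfolding q_def by simp
    ultimately show ?case by simp
  next
    case (Suc i)
    show ?case
    proof (rule value_tendsto_of_next[OF _ _ Suc.IH K])
      show "j \<le> q (Suc i) j" for j using j_le[of j] unfolding q_def by linarith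
      show "q i j = q (Suc i) j \<or> q i j = Suc (q (Suc i) j)" for j unfolding q_def by linarith
      show "x (q (Suc i) j) \<in> K" "x (q i j) \<in> K" for j
        using l[of j] unfolding q_def by (auto intro!: xK[of j])
    qed
  qed
  have "q N j = Suc (s j)" for j using l(2)[of j] unfolding q_def by simp
  then have Suc_lim: "(\<lambda>j. \<phi> (x (Suc (s j)))) \<longlonglongrightarrow> ref_lim"
    using q_lim[of N] by simp
  have sK: "x (s j) \<in> K" and Suc_sK: "x (Suc (s j)) \<in> K" for j
    by (auto intro: xK[of j] simp: N_def)
  show "(\<lambda>j. \<phi> (x (s j))) \<longlonglongrightarrow> ref_lim"
    by (rule value_tendsto_of_next[OF j_le _ Suc_lim K sK Suc_sK]) simp
  have gap: "(\<lambda>j. ref_val (s j) - \<phi> (x (Suc (s j)))) \<longlonglongrightarrow> 0"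
    using tendsto_diff[OF ref_val_tendsto_along[OF j_le] Suc_lim] by simp
  have "0 \<le> decrement k" "decrement k \<le> ref_val k - \<phi> (x (Suc k))" for k
    using decrement_nonneg[of k] value_Suc_le[of k] by linarith+
  then show "(\<lambda>j. decrement (s j)) \<longlonglongrightarrow> 0"
    by (intro tendsto_sandwich[OF _ _ tendsto_const gap]) simp_all
qed

lemma subseq_dir_tendsto_zero:
  assumes s: "strict_mono s" and bounded: "bounded (range (\<lambda>j. x (s j)))"
  shows "(\<lambda>j. norm (d (s j))) \<longlonglongrightarrow> 0"
proof -
  obtain t where t: "t > 0" "\<And>j. t \<le> tau (s j)"
    using stepsize_bounded_below[OF bounded] by blast
  define c where "c = \<sigma> * a * t"
  have c: "c > 0" unfolding c_def using params a_pos t(1) by simp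
  have bound: "norm (d (s j)) \<le> sqrt (decrement (s j) / c)" for j
  proof (rule real_le_rsqrt)
    have "c * (norm (d (s j)))\<^sup>2 \<le> decrement (s j)"
      unfolding c_def decrement_def using params a_pos t(2)[of j]
      by (intro mult_right_mono[OF mult_left_mono]) simp_all
    then show "(norm (d (s j)))\<^sup>2 \<le> decrement (s j) / c"
      using c by (simp add: pos_le_divide_eq mult.commute)
  qed
  show ?thesis
  proof (rule Lim_null_comparison)
    show "eventually (\<lambda>j. norm (norm (d (s j))) \<le> sqrt (decrement (s j) / c)) sequentially"
      using bound by simp
    show "(\<lambda>j. sqrt (decrement (s j) / c)) \<longlonglongrightarrow> 0"
      using tendsto_real_sqrt[OF tendsto_divide_zero[OF subseq_value_tendsto(2)[OF s bounded]]]
      by simp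
  qed
qed

lemma subseq_step_tendsto_zero:
  assumes s: "strict_mono s" and bounded: "bounded (range (\<lambda>j. x (s j)))"
  shows "(\<lambda>j. norm (x (Suc (s j)) - x (s j))) \<longlonglongrightarrow> 0"
proof (rule Lim_null_comparison)
  have "norm (x (Suc k) - x k) \<le> tau_max * norm (d k)" for k
    unfolding norm_step using tau_le_tau_max by (rule mult_right_mono) simp
  then show "eventually (\<lambda>j. norm (norm (x (Suc (s j)) - x (s j))) \<le> tau_max * norm (d (s j))) sequentially"
    by simp
  show "(\<lambda>j. tau_max * norm (d (s j))) \<longlonglongrightarrow> 0"
    using tendsto_mult_right_zero[OF subseq_dir_tendsto_zero[OF s bounded]] by simp
qed

lemma subseq_subgrad_tendsto_zero:
  assumes s: "strict_mono s" and bounded: "bounded (range (\<lambda>j. x (s j)))"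
  shows "(\<lambda>j. norm (w (s j))) \<longlonglongrightarrow> 0"
proof -
  obtain b where b: "\<forall>j. norm (w (s j)) \<le> b * norm (d (s j))"
    using subgrad_le_dir[OF s, unfolded comp_def] bounded by blast
  show ?thesis
  proof (rule Lim_null_comparison)
    show "eventually (\<lambda>j. norm (norm (w (s j))) \<le> b * norm (d (s j))) sequentially"
      using b by simp
    show "(\<lambda>j. b * norm (d (s j))) \<longlonglongrightarrow> 0"
      using tendsto_mult_right_zero[OF subseq_dir_tendsto_zero[OF s bounded]] .
  qed
qed

lemma acc_point_stationary:
  assumes "y \<in> acc_points x"
  shows "0 \<in> clarke_subdiff \<phi> y"
proof -
  obtain s where s: "strict_mono s" "(x \<circ> s) \<longlonglongrightarrow> y"
    using assms unfolding acc_points_def by blast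
  then have "bounded (range (\<lambda>j. x (s j)))"
    using convergent_imp_bounded by (auto simp: o_def)
  then have "(\<lambda>j. w (s j)) \<longlonglongrightarrow> 0"
    using subseq_subgrad_tendsto_zero[OF s(1)] by (simp add: tendsto_norm_zero_iff)
  with upper_quadratic s(2) show ?thesis
    by (rule clarke_stationary_of_limit) (simp add: subgrad)
qed

lemma bounded_imp_steps_tendsto_zero:
  assumes "bounded (range x)"
  shows "(\<lambda>k. dist (x (Suc k)) (x k)) \<longlonglongrightarrow> 0"
  using subseq_step_tendsto_zero[of id] assms by (simp add: dist_norm strict_mono_id)

lemma bounded_imp_connected_acc_points:
  assumes "bounded (range x)"
  shows "connected (acc_points x)"
  by (rule connected_acc_points[OF assms bounded_imp_steps_tendsto_zero[OF assms]])

lemma converges_to_stationary_of_isolated_acc_point: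
  assumes bounded: "bounded (range x)" and "y \<in> acc_points x" "e > 0"
    and "\<And>z. z \<in> acc_points x \<Longrightarrow> z \<noteq> y \<Longrightarrow> e \<le> dist z y"
  shows "x \<longlonglongrightarrow> y" and "0 \<in> clarke_subdiff \<phi> y"
proof -
  have "acc_points x = {y}"
    using bounded_imp_connected_acc_points[OF bounded] assms(2-)
    by (rule acc_points_eq_singleton_of_isolated)
  then show "x \<longlonglongrightarrow> y" by (rule bounded_tendsto_of_acc_points_singleton[OF bounded])
  show "0 \<in> clarke_subdiff \<phi> y" using assms(2) by (rule acc_point_stationary)
qed

lemma exists_small_decrement:
  assumes "0 < n"
  shows "\<exists>j < n * (M + 1). real n * decrement j \<le> ref_val 0 - ref_lim"
proof -
  obtain J where J: "\<And>k. J k \<in> {k..k + M}" "\<And>k. ref_val (k + M + 1) \<le> ref_val k - decrement (J k)"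
    using ref_val_block_decrease by metis
  define f where "f b = decrement (J (b * (M + 1)))" for b
  have sum: "ref_val (n * (M + 1)) \<le> ref_val 0 - (\<Sum>b<n. f b)" for n
  proof (induction n)
    case (Suc n)
    then show ?case using J(2)[of "n * (M + 1)"] by (simp add: f_def algebra_simps)
  qed simp
  define b where "b = arg_min_on f {..<n}"
  have b: "b < n" "\<And>b'. b' < n \<Longrightarrow> f b \<le> f b'"
    using arg_min_if_finite(1)[of "{..<n}" f] arg_min_least[of "{..<n}" _ f] assms
    unfolding b_def by auto
  have "real n * f b \<le> (\<Sum>b<n. f b)"
    using sum_bounded_below[of "{..<n}" "f b" f] b(2) by simp
  also have "\<dots> \<le> ref_val 0 - ref_lim"
    using sum[of n] ref_lim_le[of "n * (M + 1)"] by linarith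
  finally have "real n * decrement (J (b * (M + 1))) \<le> ref_val 0 - ref_lim"
    unfolding f_def .
  moreover have "J (b * (M + 1)) < n * (M + 1)"
  proof -
    have "J (b * (M + 1)) \<le> b * (M + 1) + M" using J(1) by simp
    also have "\<dots> < Suc b * (M + 1)" by simp
    also have "\<dots> \<le> n * (M + 1)" using b(1) by (intro mult_right_mono) auto
    finally show ?thesis .
  qed
  ultimately show ?thesis by blast
qed

lemma min_residual_rate:
  assumes bounded: "bounded (range x)"
  shows "\<exists>c>0. \<forall>k. (MIN j\<in>{..k}. norm (x (Suc j) - x j) + norm (w j) + norm (d j))
                    \<le> c / sqrt (real k + 1)"
proof -
  obtain t where t: "t > 0" "\<And>j. t \<le> tau j"
    using stepsize_bounded_below[of id] bounded by auto
  obtain b where b: "\<forall>j. norm (w j) \<le> b * norm (d j)"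
    using subgrad_le_dir[of id] bounded strict_mono_id by auto
  define C where "C = tau_max + b + 1"
  define Q where "Q = C\<^sup>2 / (\<sigma> * a * t)"
  have Q: "0 \<le> Q" unfolding Q_def using params a_pos t(1) by simp
  show ?thesis
  proof (rule Min_prefix_le_inverse_sqrt[where \<delta> = "\<lambda>j. Q * decrement j"])
    fix j
    have "norm (x (Suc j) - x j) \<le> tau_max * norm (d j)"
      unfolding norm_step using tau_le_tau_max by (rule mult_right_mono) simp
    then have "norm (x (Suc j) - x j) + norm (w j) + norm (d j) \<le> C * norm (d j)"
      using b[rule_format, of j] unfolding C_def by (simp add: algebra_simps)
    then have "(norm (x (Suc j) - x j) + norm (w j) + norm (d j))\<^sup>2 \<le> C\<^sup>2 * (norm (d j))\<^sup>2"
      by (simp add: power_mono power_mult_distrib[symmetric])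
    also have "\<dots> = Q * ((\<sigma> * a * t) * (norm (d j))\<^sup>2)"
      unfolding Q_def using params a_pos t(1) by simp
    also have "\<dots> \<le> Q * decrement j"
      unfolding decrement_def using params a_pos t(2)[of j] Q
      by (intro mult_left_mono mult_right_mono[OF mult_left_mono]) simp_all
    finally show "(norm (x (Suc j) - x j) + norm (w j) + norm (d j))\<^sup>2 \<le> Q * decrement j" .
  next
    fix n :: nat assume "0 < n"
    then obtain j where "j < n * (M + 1)" "real n * decrement j \<le> ref_val 0 - ref_lim"
      using exists_small_decrement by blast
    then show "\<exists>j < n * (M + 1). real n * (Q * decrement j) \<le> Q * (ref_val 0 - ref_lim)"
      using Q by (metis mult.left_commute mult_left_mono)
  qed simp_all
qed

lemma bounded_subseq_limits:
  assumes s: "strict_mono s" and bounded: "bounded (range (x \<circ> s))"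
  shows "(\<exists>t>0. \<forall>j. t \<le> tau (s j)) \<and>
    (\<lambda>j. norm (x (Suc (s j)) - x (s j))) \<longlonglongrightarrow> 0 \<and>
    (\<lambda>j. norm (w (s j))) \<longlonglongrightarrow> 0 \<and>
    (\<lambda>j. norm (d (s j))) \<longlonglongrightarrow> 0 \<and>
    (\<exists>L. (\<lambda>k. \<phi> (x (ell \<phi> x m k))) \<longlonglongrightarrow> L \<and> (\<lambda>j. \<phi> (x (s j))) \<longlonglongrightarrow> L)"
proof -
  have bounded': "bounded (range (\<lambda>j. x (s j)))" using bounded by (simp add: comp_def)
  have "(\<lambda>k. \<phi> (x (ell \<phi> x m k))) \<longlonglongrightarrow> ref_lim"
    unfolding value_ell by (rule ref_val_tendsto)
  then show ?thesis
    using stepsize_bounded_below[OF bounded'] subseq_step_tendsto_zero[OF s bounded']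
      subseq_subgrad_tendsto_zero[OF s bounded'] subseq_dir_tendsto_zero[OF s bounded']
      subseq_value_tendsto(1)[OF s bounded']
    by blast
qed

end

theorem theorem4p5:
  fixes \<phi> :: "'a::euclidean_space \<Rightarrow> real"
    and x w d :: "nat \<Rightarrow> 'a" and taubar tau :: "nat \<Rightarrow> real" and m :: "nat \<Rightarrow> nat"
    and \<tau>min \<sigma> \<beta> :: real
  assumes uC2: "upper_C2 TYPE('c::topological_space) \<phi>"
    and bdd: "bdd_below (range \<phi>)"
    and par: "\<tau>min > 0" "0 < \<sigma>" "\<sigma> < 1" "0 < \<beta>" "\<beta> < 1"
    and subgrad: "\<And>k. (\<forall>i<k. w i \<noteq> 0) \<Longrightarrow> w k \<in> clarke_subdiff \<phi> (x k)"
    and step: "\<And>k. (\<forall>i\<le>k. w i \<noteq> 0) \<Longrightarrow> nsm_step \<phi> \<tau>min \<sigma> \<beta> x w d taubar tau m k"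
    and hyp_a: "\<exists>a>0. \<forall>k. (\<forall>i\<le>k. w i \<noteq> 0) \<longrightarrow> w k \<bullet> d k \<le> - a * (norm (d k))\<^sup>2"
    and hyp_b: "(\<forall>k. w k \<noteq> 0) \<Longrightarrow>
       \<forall>s::nat \<Rightarrow> nat. strict_mono s \<and> bounded (range (x \<circ> s)) \<longrightarrow>
         (\<exists>b>0. \<forall>j. norm (w (s j)) \<le> b * norm (d (s j)))"
    and hyp_c: "\<exists>M::nat. \<forall>k. (\<forall>i\<le>k. w i \<noteq> 0) \<longrightarrow> m (Suc k) \<le> min (m k + 1) M"
  shows "(\<exists>K. (\<forall>i<K. w i \<noteq> 0) \<and> w K = 0 \<and> 0 \<in> clarke_subdiff \<phi> (x K))
       \<or> ((\<forall>k. w k \<noteq> 0) \<and>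
          (bdd_above (range tau) \<longrightarrow>
            (\<forall>s::nat \<Rightarrow> nat. strict_mono s \<and> bounded (range (x \<circ> s)) \<longrightarrow>
               (\<exists>t>0. \<forall>j. tau (s j) \<ge> t) \<and>
               (\<lambda>j. norm (x (Suc (s j)) - x (s j))) \<longlonglongrightarrow> 0 \<and>
               (\<lambda>j. norm (w (s j))) \<longlonglongrightarrow> 0 \<and>
               (\<lambda>j. norm (d (s j))) \<longlonglongrightarrow> 0 \<and>
               (\<exists>L. (\<lambda>k. \<phi> (x (ell \<phi> x m k))) \<longlonglongrightarrow> L \<and>
                    (\<lambda>j. \<phi> (x (s j))) \<longlonglongrightarrow> L)) \<and>
            (bounded (range x) \<longrightarrow>
               acc_points x \<noteq> {} \<and> closed (acc_points x) \<and> connected (acc_points x) \<and>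
               (\<exists>c>0. \<forall>k. (MIN j\<in>{..k}. norm (x (Suc j) - x j) + norm (w j) + norm (d j))
                          \<le> c / sqrt (real k + 1))) \<and>
            (\<forall>y\<in>acc_points x. 0 \<in> clarke_subdiff \<phi> y) \<and>
            (bounded (range x) \<and>
             (\<exists>y\<in>acc_points x. \<exists>e>0. \<forall>z\<in>acc_points x. z \<noteq> y \<longrightarrow> dist z y \<ge> e) \<longrightarrow>
               (\<exists>y. x \<longlonglongrightarrow> y \<and> 0 \<in> clarke_subdiff \<phi> y))))"
proof (cases "\<exists>K. w K = 0")
  case True
  define K where "K = (LEAST K. w K = 0)"
  have "w K = 0" and before: "\<forall>i<K. w i \<noteq> 0"
    using LeastI_ex[OF True] not_less_Least unfolding K_def by auto
  then have "0 \<in> clarke_subdiff \<phi> (x K)" using subgrad by metis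
  then show ?thesis using \<open>w K = 0\<close> before by blast
next
  case False
  then have run: "\<forall>k. w k \<noteq> 0" by blast
  obtain a where a: "a > 0" "\<And>k. w k \<bullet> d k \<le> - a * (norm (d k))\<^sup>2"
    using hyp_a run by blast
  obtain M where M: "\<And>k. m (Suc k) \<le> min (m k + 1) M"
    using hyp_c run by blast
  have nsm_run_if_bounded_tau: "nsm_run \<phi> x w d taubar tau m \<tau>min \<sigma> \<beta> a M"
    if "bdd_above (range tau)"
    using upper_C2_imp_locally_upper_quadratic[OF uC2] bdd par subgrad step a M hyp_b[OF run] run that
    by unfold_locales auto
  show ?thesis
    using run
      nsm_run.bounded_subseq_limits[OF nsm_run_if_bounded_tau]
      nsm_run.acc_point_stationary[OF nsm_run_if_bounded_tau]
      nsm_run.min_residual_rate[OF nsm_run_if_bounded_tau]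
      nsm_run.bounded_imp_connected_acc_points[OF nsm_run_if_bounded_tau]
      nsm_run.converges_to_stationary_of_isolated_acc_point[OF nsm_run_if_bounded_tau]
      bounded_imp_acc_points_nonempty closed_acc_points
    by (intro disjI2 conjI impI allI ballI) (simp_all, blast+)
qed

end
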